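(* Let $\underline{\mathbb{G}}=(\mathbb{G},\mathcal{V},\omega_{\mathcal{V}},\mathcal{F},\omega_{\mathcal{F}})$ be a packaged ribbon graph and $\Gamma$ a finite group whose irreducible representations have dimensions $n_1,\dots,n_k$. (1) For any edge $e$ of $\mathbb{G}$, \[q_\Gamma(\underline{\mathbb{G}}_\mathcal{V})=|\Gamma|^{2-\mu(e)}q_\Gamma((\underline{\mathbb{G}}/e)_\mathcal{V})-q_\Gamma((\underline{\mathbb{G}}\backslash e)_\mathcal{V}),\] and if $\mathbb{G}$ has no edges then $q_\Gamma(\underline{\mathbb{G}}_\mathcal{V})=\prod_{[v]\in\mathcal{V}}|\Gamma|^{-1}\sum_{i}n_i^{1+|[v]|-\omega_{\mathcal{V}}([v])}$. (2) For any edge $e$ of $\mathbb{G}$, \[p_\Gamma(\underline{\mathbb{G}}_\mathcal{F})=|\Gamma|^{2-\eta(e)}p_\Gamma((\underline{\mathbb{G}}\backslash e)_\mathcal{F})-p_\Gamma((\underline{\mathbb{G}}/e)_\mathcal{F}),\] and if $\mathbb{G}$ has no edges then $p_\Gamma(\underline{\mathbb{G}}_\mathcal{F})=\prod_{[f]\in\mathcal{F}}|\Gamma|^{-1}\sum_{i}n_i^{1+|[f]|-\omega_{\mathcal{F}}([f])}$. Here $|[a]|$ is the number of elements of the block $[a]$.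
   Context: All ribbon graphs are orientable. A ribbon graph $\mathbb{G}=(V,E)$ is an orientable surface with boundary formed as a union of discs $V$ (vertices) and discs $E$ (edges) meeting in disjoint arcs, each arc on the boundary of exactly one vertex and one edge, each edge containing two arcs; $v,e,f$ count vertices, edges, boundary components. $\mathbb{G}\backslash e$ removes $e$; $\mathbb{G}|A$ is the spanning ribbon subgraph on $A\subseteq E$, $A^c=E\setminus A$; $\mathbb{G}/e$ is obtained by attaching discs (new vertices) to the boundary curves of $e\cup u\cup v$ ($u,v$ ends of $e$) and removing $e,u,v$; $\mathbb{G}/A$ contracts all edges of $A$; boundary components of contractions correspond naturally to those of $\mathbb{G}$. The dual $\mathbb{G}^*$ has as vertices discs capping the boundary components of $\mathbb{G}$, same edges. A packaged ribbon graph $\underline{\mathbb{G}}=(\mathbb{G},\mathcal{V},\omega_{\mathcal{V}},\mathcal{F},\omega_{\mathcal{F}})$: $\mathcal{V}$ a partition of the vertex set, $\mathcal{F}$ a partition of the set of boundary components (equivalently of vertices of $\mathbb{G}^*$), weightings $\omega_{\mathcal{V}}:\mathcal{V}\to\mathbb{N}_0$, $\omega_{\mathcal{F}}:\mathcal{F}\to\mathbb{N}_0$; totals $\omega_{\mathcal{V}}(\mathbb{G}),\omega_{\mathcal{F}}(\mathbb{G})$. $\underline{\mathbb{G}}_\mathcal{V}=(\mathbb{G},\mathcal{V},\omega_{\mathcal{V}})$, $\underline{\mathbb{G}}_\mathcal{F}=(\mathbb{G},\mathcal{F},\omega_{\mathcal{F}})$. $\eta(e)$ is the number of blocks of $\mathcal{F}$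 containing a boundary component meeting $e$; $\mu(e)$ is the number of blocks of $\mathcal{V}$ containing an end of $e$. Deletion $\underline{\mathbb{G}}\backslash e$: ribbon graph $\mathbb{G}\backslash e$, $\mathcal{V},\omega_{\mathcal{V}}$ unchanged. (i) If $e$ meets one boundary component $f$, deletion creates $f',g'$ replacing $f$; $[f]$ becomes $([f]\setminus\{f\})\cup\{f',g'\}$ with weight $+1$. (ii) If $e$ meets $f\ne g$ with $[f]=[g]$, deletion creates $f'$; block becomes $([f]\setminus\{f,g\})\cup\{f'\}$ with weight $+1$. (iii) If $[f]\ne[g]$, blocks $[f],[g]$ replaced by $([f]\cup[g]\setminus\{f,g\})\cup\{f'\}$ with weight $\omega_{\mathcal{F}}([f])+\omega_{\mathcal{F}}([g])$. Contraction $\underline{\mathbb{G}}/e$: ribbon graph $\mathbb{G}/e$, $\mathcal{F},\omega_{\mathcal{F}}$ transported. (i) If $e$ is a loop at $u$, contraction creates $u',v'$ replacing $u$; $[u]$ becomes $([u]\setminus\{u\})\cup\{u',v'\}$ with weight $+1$. (ii) If $e$ has ends $u\ne v$, $[u]=[v]$, merged vertex $u'$; block becomes $([u]\setminus\{u,v\})\cup\{u'\}$ with weight $+1$. (iii) If $[u]\neq[v]$, blocks merged to $([u]\cup[v]\setminus\{u,v\})\cup\{u'\}$ with weight $\omega_{\mathcal{V}}([u])+\omega_{\mathcal{V}}([v])$. Other blocks/weights unchanged. Packaging: $G(\mathbb{G};\mathcal{V})$ has vertex set $\mathcal{V}$ and an edge $([u],[v])$ for each edge $(u,v)$ of $\mathbb{G}$;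 likewise $G(\mathbb{G}^*;\mathcal{F})$. For a subgraph $K$ of $G(\mathbb{G};\mathcal{V})$, $\mathbb{G}[K]$ is the ribbon subgraph with all vertices in blocks that are vertices of $K$ and edges corresponding to those of $K$, and $\underline{\mathbb{G}}_\mathcal{V}[K]=(\mathbb{G}[K],\mathcal{V}',\omega'_{\mathcal{V}})$ with restrictions; for a subgraph $H$ of $G(\mathbb{G}^*;\mathcal{F})$, $\underline{\mathbb{G}}_\mathcal{F}[H]=((\mathbb{G}^*[H])^*,\mathcal{F}',\omega'_{\mathcal{F}})$ with restrictions. If $G(\mathbb{G};\mathcal{V})$ is connected, $q^1_\Gamma(\underline{\mathbb{G}}_\mathcal{V})=|\Gamma|^{e(\mathbb{G})-|\mathcal{V}|}\sum_i n_i^{f(\mathbb{G})-e(\mathbb{G})+|\mathcal{V}|-\omega_{\mathcal{V}}(\mathbb{G})}$, otherwise the product of $q^1_\Gamma(\underline{\mathbb{G}}_\mathcal{V}[K])$ over components $K$; $q_\Gamma(\underline{\mathbb{G}}_\mathcal{V})=\sum_{A\subseteq E}(-1)^{|A^c|}q^1_\Gamma((\mathbb{G}|A,\mathcal{V},\omega_{\mathcal{V}}))$. If $G(\mathbb{G}^*;\mathcal{F})$ is connected, $p^1_\Gamma(\underline{\mathbb{G}}_\mathcal{F})=|\Gamma|^{e(\mathbb{G})-|\mathcal{F}|}\sum_i n_i^{v(\mathbb{G})-e(\mathbb{G})+|\mathcal{F}|-\omega_{\mathcal{F}}(\mathbb{G})}$, otherwise the product of $p^1_\Gamma(\underline{\mathbb{G}}_\mathcal{F}[H])$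 over components $H$; $p_\Gamma(\underline{\mathbb{G}}_\mathcal{F})=\sum_{A\subseteq E}(-1)^{|A^c|}p^1_\Gamma((\mathbb{G}/A^c,\mathcal{F},\omega_{\mathcal{F}}))$. These definitions apply to $\underline{\mathbb{G}}\backslash e$ and $\underline{\mathbb{G}}/e$ with their updated partitions and weights. *)

theory Defs
  imports "HOL-Algebra.Group" "HOL-Combinatorics.Permutations" "Jordan_Normal_Form.Matrix"
begin

definition is_rep :: "'g monoid \<Rightarrow> nat \<Rightarrow> ('g \<Rightarrow> complex mat) \<Rightarrow> bool" where
  "is_rep G n \<rho> \<longleftrightarrow>
     (\<forall>g\<in>carrier G. \<rho> g \<in> carrier_mat n n) \<and>
     (\<forall>g\<in>carrier G. \<forall>h\<in>carrier G. \<rho> (g \<otimes>\<^bsub>G\<^esub> h) = \<rho> g * \<rho> h) \<and>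
     \<rho> \<one>\<^bsub>G\<^esub> = 1\<^sub>m n"

definition invariant_subspace :: "'g monoid \<Rightarrow> nat \<Rightarrow> ('g \<Rightarrow> complex mat) \<Rightarrow> complex vec set \<Rightarrow> bool" where
  "invariant_subspace G n \<rho> W \<longleftrightarrow>
     W \<subseteq> carrier_vec n \<and> 0\<^sub>v n \<in> W \<and>
     (\<forall>v\<in>W. \<forall>w\<in>W. v + w \<in> W) \<and> (\<forall>c. \<forall>v\<in>W. c \<cdot>\<^sub>v v \<in> W) \<and>
     (\<forall>g\<in>carrier G. \<forall>v\<in>W. \<rho> g *\<^sub>v v \<in> W)"

definition irreducible_rep :: "'g monoid \<Rightarrow> nat \<Rightarrow> ('g \<Rightarrow> complex mat) \<Rightarrow> bool" where
  "irreducible_rep G n \<rho> \<longleftrightarrow> n > 0 \<and> is_rep G n \<rho> \<and>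
     (\<forall>W. invariant_subspace G n \<rho> W \<longrightarrow> W = {0\<^sub>v n} \<or> W = carrier_vec n)"

definition iso_rep :: "'g monoid \<Rightarrow> nat \<Rightarrow> ('g \<Rightarrow> complex mat) \<Rightarrow> nat \<Rightarrow> ('g \<Rightarrow> complex mat) \<Rightarrow> bool" where
  "iso_rep G n \<rho> m \<rho>' \<longleftrightarrow> n = m \<and>
     (\<exists>T \<in> carrier_mat n n. invertible_mat T \<and> (\<forall>g\<in>carrier G. T * \<rho> g = \<rho>' g * T))"

definition irrep_dims :: "'g monoid \<Rightarrow> nat list \<Rightarrow> bool" where
  "irrep_dims G ns \<longleftrightarrow> (\<exists>\<rho>s :: nat \<Rightarrow> 'g \<Rightarrow> complex mat.
     (\<forall>i<length ns. irreducible_rep G (ns ! i) (\<rho>s i)) \<and>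
     (\<forall>i<length ns. \<forall>j<length ns. i \<noteq> j \<longrightarrow> \<not> iso_rep G (ns ! i) (\<rho>s i) (ns ! j) (\<rho>s j)) \<and>
     (\<forall>n \<rho>. irreducible_rep G n \<rho> \<longrightarrow> (\<exists>i<length ns. iso_rep G n \<rho> (ns ! i) (\<rho>s i))))"

section \<open>Orientable ribbon graphs as rotation systems\<close>

text \<open>Darts rD (two per edge, paired by the fixed-point-free involution ralp), rotation rsig
  at vertices (its cycles are the vertices with at least one edge), and a set rI of tokens,
  one per isolated vertex (an isolated vertex is a disc with one boundary component).
  Boundary components = cycles of rsig o ralp, plus one per isolated vertex.\<close>

record 'd rgraph =
  rD :: "'d set"
  rI :: "'d set"
  rsig :: "'d \<Rightarrow> 'd"
  ralp :: "'d \<Rightarrow> 'd"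

definition orb :: "('d \<Rightarrow> 'd) \<Rightarrow> 'd \<Rightarrow> 'd set" where
  "orb f x = {(f ^^ k) x | k. True}"

definition rg_phi :: "'d rgraph \<Rightarrow> 'd \<Rightarrow> 'd" where
  "rg_phi G = rsig G \<circ> ralp G"

definition wf_rg :: "'d rgraph \<Rightarrow> bool" where
  "wf_rg G \<longleftrightarrow> finite (rD G) \<and> finite (rI G) \<and> rD G \<inter> rI G = {} \<and>
     rsig G permutes rD G \<and> ralp G permutes rD G \<and>
     (\<forall>x\<in>rD G. ralp G (ralp G x) = x \<and> ralp G x \<noteq> x)"

definition rg_verts :: "'d rgraph \<Rightarrow> 'd set set" where
  "rg_verts G = {orb (rsig G) x | x. x \<in> rD G} \<union> {{t} | t. t \<in> rI G}"

definition rg_faces :: "'d rgraph \<Rightarrow> 'd set set" where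
  "rg_faces G = {orb (rg_phi G) x | x. x \<in> rD G} \<union> {{t} | t. t \<in> rI G}"

definition rg_edges :: "'d rgraph \<Rightarrow> 'd set set" where
  "rg_edges G = {{h, ralp G h} | h. h \<in> rD G}"

definition nv :: "'d rgraph \<Rightarrow> nat" where "nv G = card (rg_verts G)"
definition nf :: "'d rgraph \<Rightarrow> nat" where "nf G = card (rg_faces G)"
definition ne :: "'d rgraph \<Rightarrow> nat" where "ne G = card (rg_edges G)"

text \<open>Geometric dual: vertices become boundary components and vice versa.\<close>
definition rg_dual :: "'d rgraph \<Rightarrow> 'd rgraph" where
  "rg_dual G = G\<lparr>rsig := rg_phi G\<rparr>"

definition skip :: "('d \<Rightarrow> 'd) \<Rightarrow> 'd set \<Rightarrow> 'd \<Rightarrow> 'd" where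
  "skip \<pi> R x = (\<pi> ^^ (LEAST k. 0 < k \<and> (\<pi> ^^ k) x \<notin> R)) x"

text \<open>Vertices are kept;
  a vertex losing all its darts becomes an isolated vertex, represented by one of its old
  darts as token (so labels on it are transported).\<close>
definition rg_del_edges :: "'d rgraph \<Rightarrow> 'd set \<Rightarrow> 'd rgraph" where
  "rg_del_edges G R =
    \<lparr> rD = rD G - R,
      rI = rI G \<union> (\<lambda>v. SOME x. x \<in> v) ` {v. \<exists>x\<in>rD G. v = orb (rsig G) x \<and> v \<subseteq> R},
      rsig = (\<lambda>x. if x \<in> rD G - R then skip (rsig G) R x else x),
      ralp = (\<lambda>x. if x \<in> rD G - R then ralp G x else x) \<rparr>"

definition rg_con_edges :: "'d rgraph \<Rightarrow> 'd set \<Rightarrow> 'd rgraph" where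
  "rg_con_edges G R = rg_dual (rg_del_edges (rg_dual G) R)"

definition rg_restrict :: "'d rgraph \<Rightarrow> 'd set \<Rightarrow> 'd rgraph" where
  "rg_restrict G S =
    \<lparr> rD = rD G \<inter> S, rI = rI G \<inter> S,
      rsig = (\<lambda>x. if x \<in> rD G \<inter> S then rsig G x else x),
      ralp = (\<lambda>x. if x \<in> rD G \<inter> S then ralp G x else x) \<rparr>"

text \<open>The partition V of the vertices is given by a labelling plv of darts/tokens that is
  constant on vertices (blocks = labels in use), with weights pwv on blocks; likewise the
  partition F of boundary components by plf, pwf.\<close>

record ('d, 'b, 'c) pkg =
  prg :: "'d rgraph"
  plv :: "'d \<Rightarrow> 'b"
  pwv :: "'b \<Rightarrow> nat"
  plf :: "'d \<Rightarrow> 'c"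
  pwf :: "'c \<Rightarrow> nat"

definition wf_pkg :: "('d, 'b, 'c) pkg \<Rightarrow> bool" where
  "wf_pkg P \<longleftrightarrow> wf_rg (prg P) \<and>
     (\<forall>x\<in>rD (prg P). plv P (rsig (prg P) x) = plv P x) \<and>
     (\<forall>x\<in>rD (prg P). plf P (rg_phi (prg P) x) = plf P x)"

definition blocksV :: "('d, 'b, 'c) pkg \<Rightarrow> 'b set" where
  "blocksV P = plv P ` (rD (prg P) \<union> rI (prg P))"

definition blocksF :: "('d, 'b, 'c) pkg \<Rightarrow> 'c set" where
  "blocksF P = plf P ` (rD (prg P) \<union> rI (prg P))"

definition totV :: "('d, 'b, 'c) pkg \<Rightarrow> nat" where
  "totV P = (\<Sum>b\<in>blocksV P. pwv P b)"

definition totF :: "('d, 'b, 'c) pkg \<Rightarrow> nat" where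
  "totF P = (\<Sum>b\<in>blocksF P. pwf P b)"

definition bsizeV :: "('d, 'b, 'c) pkg \<Rightarrow> 'b \<Rightarrow> nat" where
  "bsizeV P b = card {v \<in> rg_verts (prg P). \<exists>x\<in>v. plv P x = b}"

definition bsizeF :: "('d, 'b, 'c) pkg \<Rightarrow> 'c \<Rightarrow> nat" where
  "bsizeF P b = card {f \<in> rg_faces (prg P). \<exists>x\<in>f. plf P x = b}"

definition mu :: "('d, 'b, 'c) pkg \<Rightarrow> 'd \<Rightarrow> nat" where
  "mu P h = card {plv P h, plv P (ralp (prg P) h)}"

definition eta :: "('d, 'b, 'c) pkg \<Rightarrow> 'd \<Rightarrow> nat" where
  "eta P h = card {plf P h, plf P (ralp (prg P) h)}"

definition pdelete :: "('d, 'b, 'c) pkg \<Rightarrow> 'd \<Rightarrow> ('d, 'b, 'c) pkg" where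
  "pdelete P h =
    (let G = prg P; h' = ralp G h; lf = plf P; wf = pwf P in
     if lf h = lf h'
     then P\<lparr>prg := rg_del_edges G {h, h'}, pwf := wf(lf h := wf (lf h) + 1)\<rparr>
     else P\<lparr>prg := rg_del_edges G {h, h'},
            plf := (\<lambda>x. if lf x = lf h' then lf h else lf x),
            pwf := wf(lf h := wf (lf h) + wf (lf h'))\<rparr>)"

definition pdual :: "('d, 'b, 'c) pkg \<Rightarrow> ('d, 'c, 'b) pkg" where
  "pdual P = \<lparr>prg = rg_dual (prg P), plv = plf P, pwv = pwf P, plf = plv P, pwf = pwv P\<rparr>"

text \<open>Contraction (G/e = (G^* \ e)^*); the rules for V are exactly the deletion rules for F
  of the dual.\<close>
definition pcontract :: "('d, 'b, 'c) pkg \<Rightarrow> 'd \<Rightarrow> ('d, 'b, 'c) pkg" where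
  "pcontract P h = pdual (pdelete (pdual P) h)"

definition linkV :: "('d, 'b, 'c) pkg \<Rightarrow> ('b \<times> 'b) set" where
  "linkV P = {(plv P h, plv P (ralp (prg P) h)) | h. h \<in> rD (prg P)}"

definition compsV :: "('d, 'b, 'c) pkg \<Rightarrow> 'b set set" where
  "compsV P = {{b'. (b, b') \<in> (linkV P)\<^sup>*} | b. b \<in> blocksV P}"

definition linkF :: "('d, 'b, 'c) pkg \<Rightarrow> ('c \<times> 'c) set" where
  "linkF P = {(plf P h, plf P (ralp (prg P) h)) | h. h \<in> rD (prg P)}"

definition compsF :: "('d, 'b, 'c) pkg \<Rightarrow> 'c set set" where
  "compsF P = {{b'. (b, b') \<in> (linkF P)\<^sup>*} | b. b \<in> blocksF P}"

definition subV :: "('d, 'b, 'c) pkg \<Rightarrow> 'b set \<Rightarrow> ('d, 'b, 'c) pkg" where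
  "subV P K = P\<lparr>prg := rg_restrict (prg P) {x. plv P x \<in> K}\<rparr>"

definition subF :: "('d, 'b, 'c) pkg \<Rightarrow> 'c set \<Rightarrow> ('d, 'b, 'c) pkg" where
  "subF P H = P\<lparr>prg := rg_dual (rg_restrict (rg_dual (prg P)) {x. plf P x \<in> H})\<rparr>"

text \<open>N = |Gamma|, ns = [n_1, ..., n_k].\<close>

definition q1conn :: "real \<Rightarrow> nat list \<Rightarrow> ('d, 'b, 'c) pkg \<Rightarrow> real" where
  "q1conn N ns P =
     N powi (int (ne (prg P)) - int (card (blocksV P))) *
     sum_list (map (\<lambda>n. real n powi
        (int (nf (prg P)) - int (ne (prg P)) + int (card (blocksV P)) - int (totV P))) ns)"

definition q1 :: "real \<Rightarrow> nat list \<Rightarrow> ('d, 'b, 'c) pkg \<Rightarrow> real" where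
  "q1 N ns P = (\<Prod>K\<in>compsV P. q1conn N ns (subV P K))"

definition qG :: "real \<Rightarrow> nat list \<Rightarrow> ('d, 'b, 'c) pkg \<Rightarrow> real" where
  "qG N ns P = (\<Sum>A\<in>Pow (rg_edges (prg P)).
     (-1) ^ card (rg_edges (prg P) - A) *
     q1 N ns (P\<lparr>prg := rg_del_edges (prg P) (\<Union>(rg_edges (prg P) - A))\<rparr>))"

definition p1conn :: "real \<Rightarrow> nat list \<Rightarrow> ('d, 'b, 'c) pkg \<Rightarrow> real" where
  "p1conn N ns P =
     N powi (int (ne (prg P)) - int (card (blocksF P))) *
     sum_list (map (\<lambda>n. real n powi
        (int (nv (prg P)) - int (ne (prg P)) + int (card (blocksF P)) - int (totF P))) ns)"

definition p1 :: "real \<Rightarrow> nat list \<Rightarrow> ('d, 'b, 'c) pkg \<Rightarrow> real" where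
  "p1 N ns P = (\<Prod>H\<in>compsF P. p1conn N ns (subF P H))"

definition pG :: "real \<Rightarrow> nat list \<Rightarrow> ('d, 'b, 'c) pkg \<Rightarrow> real" where
  "pG N ns P = (\<Sum>A\<in>Pow (rg_edges (prg P)).
     (-1) ^ card (rg_edges (prg P) - A) *
     p1 N ns (P\<lparr>prg := rg_con_edges (prg P) (\<Union>(rg_edges (prg P) - A))\<rparr>))"

end

theory Submission
  imports Defs "HOL-Combinatorics.Orbits"
begin

text \<open>For a set A of edges, q1 of G \ A is a product over the components of the block
  multigraph G(G \ A; V), and the factor of a component only depends on its numbers of edges,
  blocks and boundary components and on its total weight. The boundary components are counted
  with the face permutation of G in which the edges of A are cut into dangling half-edges; an
  orbit lying inside A is a vertex that became isolated. Contracting an edge e changes no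
  boundary component, so inside q1 it only contracts the link e of the block multigraph: the
  factor of its component is multiplied by |\<Gamma>|^(mu(e) - 2), while the weight rules keep the
  exponents of the n_i unchanged. Splitting the sum defining q_\<Gamma> according to whether e lies
  in A gives the recurrence for q_\<Gamma>, and the duality p_\<Gamma>(G_F) = q_\<Gamma>((G^*)_V) gives the one
  for p_\<Gamma>. Both are identities of the defining sums: only |\<Gamma>| \<noteq> 0 is used, not the
  representation theory of \<Gamma>.\<close>

section \<open>Orbits and skipping a set along a permutation\<close>

lemma funpow_funpow: "(p ^^ m) ((p ^^ n) x) = (p ^^ (m + n)) x"
  by (simp add: funpow_add)

lemma funpow_in_orb: "(p ^^ k) x \<in> orb p x"
  unfolding orb_def by blast

lemma self_in_orb: "x \<in> orb p x"
  using funpow_in_orb[where k = 0] by simp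

lemma some_in_orb: "(SOME y. y \<in> orb p x) \<in> orb p x"
  by (rule someI[of "\<lambda>y. y \<in> orb p x", OF self_in_orb])

lemma orb_trans: "y \<in> orb p x \<Longrightarrow> z \<in> orb p y \<Longrightarrow> z \<in> orb p x"
  unfolding orb_def by (auto simp: funpow_funpow)

lemma step_in_orb: "p x \<in> orb p x"
  using funpow_in_orb[where k = "Suc 0" and p = p and x = x] by simp

lemma orb_step_subset: "orb p (p x) \<subseteq> orb p x"
  using orb_trans[OF step_in_orb[of p x]] by blast

lemma orb_eq_insert_orbit: "orb p x = insert x (orbit p x)"
proof
  show "orb p x \<subseteq> insert x (orbit p x)"
  proof
    fix y assume "y \<in> orb p x"
    then obtain k where "y = (p ^^ k) x" unfolding orb_def by auto
    then show "y \<in> insert x (orbit p x)" unfolding orbit_altdef by (cases "k = 0") auto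
  qed
  show "insert x (orbit p x) \<subseteq> orb p x"
    unfolding orbit_altdef by (auto simp: self_in_orb funpow_in_orb)
qed

lemma orb_subset_permutes: "p permutes Y \<Longrightarrow> x \<in> Y \<Longrightarrow> orb p x \<subseteq> Y"
  by (simp add: orb_eq_insert_orbit permutes_orbit_subset)

lemma orb_eq_if_mem:
  assumes "permutation p" "y \<in> orb p x"
  shows "orb p y = orb p x"
proof -
  have "orb p z = orbit p z" for z
    using assms(1) by (simp add: orb_def orbit_altdef_permutation)
  then show ?thesis using assms by (simp add: orbit_cyclic_eq3 cyclic_on_orbit')
qed

lemma orb_eq_if_common:
  "permutation p \<Longrightarrow> z \<in> orb p x \<Longrightarrow> z \<in> orb p y \<Longrightarrow> orb p x = orb p y"
  by (metis orb_eq_if_mem)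

lemma funpow_invariant: "(\<And>y. Q (p y) = Q y) \<Longrightarrow> Q ((p ^^ k) x) = Q x"
  by (induct k) auto

lemma orb_invariant: "(\<And>y. Q (p y) = Q y) \<Longrightarrow> z \<in> orb p x \<Longrightarrow> Q z = Q x"
  unfolding orb_def using funpow_invariant[of Q p] by auto

lemma orb_cong:
  assumes "x \<in> Z" "\<And>u. u \<in> Z \<Longrightarrow> f u = g u" "\<And>u. u \<in> Z \<Longrightarrow> g u \<in> Z"
  shows "orb f x = orb g x"
proof -
  have "(f ^^ k) x = (g ^^ k) x \<and> (g ^^ k) x \<in> Z" for k
    by (induct k) (use assms in auto)
  then show ?thesis unfolding orb_def by simp
qed

lemma orb_subset_if_closed:
  assumes "\<And>u. u \<in> S \<Longrightarrow> f u \<in> S" "x \<in> S"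
  shows "orb f x \<subseteq> S"
proof
  fix z assume "z \<in> orb f x"
  then obtain k where "z = (f ^^ k) x" unfolding orb_def by blast
  moreover have "(f ^^ k) x \<in> S" by (induct k) (use assms in auto)
  ultimately show "z \<in> S" by simp
qed

lemma image_eq_if_witnessed:
  assumes "A \<subseteq> B" "\<And>x. x \<in> B - A \<Longrightarrow> \<exists>y\<in>A. f y = f x"
  shows "f ` A = f ` B"
proof
  show "f ` A \<subseteq> f ` B" using assms(1) by blast
  show "f ` B \<subseteq> f ` A"
  proof
    fix b assume "b \<in> f ` B"
    then obtain x where x: "x \<in> B" "b = f x" by blast
    show "b \<in> f ` A"
    proof (cases "x \<in> A")
      case False
      then obtain y where "y \<in> A" "f y = f x" using assms(2)[of x] x(1) by blast
      then show ?thesis using x(2) by (metis image_eqI)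
    qed (use x in blast)
  qed
qed

lemma skip_exists:
  assumes "permutation p" "x \<notin> X"
  shows "\<exists>k>0. (p ^^ k) x \<notin> X"
  using permutation_self[OF assms(1)] assms(2) by metis

lemma skip_eqI:
  assumes "0 < k" "(p ^^ k) x \<notin> X" "\<And>j. 0 < j \<Longrightarrow> j < k \<Longrightarrow> (p ^^ j) x \<in> X"
  shows "skip p X x = (p ^^ k) x"
proof -
  have "(LEAST k. 0 < k \<and> (p ^^ k) x \<notin> X) = k"
    by (rule Least_equality) (use assms in \<open>auto simp: not_less[symmetric]\<close>)
  then show ?thesis unfolding skip_def by simp
qed

lemma skipE:
  assumes "\<exists>k>0. (p ^^ k) x \<notin> X"
  obtains k where "0 < k" "(p ^^ k) x \<notin> X" "\<And>j. 0 < j \<Longrightarrow> j < k \<Longrightarrow> (p ^^ j) x \<in> X"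
    "skip p X x = (p ^^ k) x"
proof
  let ?k = "LEAST k. 0 < k \<and> (p ^^ k) x \<notin> X"
  show "0 < ?k" "(p ^^ ?k) x \<notin> X" using LeastI_ex[OF assms] by auto
  show "(p ^^ j) x \<in> X" if "0 < j" "j < ?k" for j
    using not_less_Least[OF that(2)] that(1) by blast
  show "skip p X x = (p ^^ ?k) x" unfolding skip_def ..
qed

lemma skip_notin_in_orb:
  assumes "permutation p" "x \<notin> X"
  shows "skip p X x \<notin> X" "skip p X x \<in> orb p x"
  using skipE[OF skip_exists[OF assms]] by (metis, metis funpow_in_orb)

lemma skip_invariant: "(\<And>y. Q (p y) = Q y) \<Longrightarrow> Q (skip p X x) = Q x"
  unfolding skip_def by (rule funpow_invariant)

lemma orb_skip:
  assumes p: "permutation p" and x: "x \<notin> X"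
  shows "orb (skip p X) x = orb p x - X"
proof
  have "((skip p X) ^^ k) x \<in> orb p x - X" for k
  proof (induct k)
    case (Suc k)
    then show ?case
      using skip_notin_in_orb[OF p, of "((skip p X) ^^ k) x" X] orb_trans by auto
  qed (use x self_in_orb in auto)
  then show "orb (skip p X) x \<subseteq> orb p x - X" unfolding orb_def by blast
next
  have "(p ^^ m) x \<in> orb (skip p X) x" if "x \<notin> X" "(p ^^ m) x \<notin> X" for m x
    using that
  proof (induct m arbitrary: x rule: less_induct)
    case (less m)
    show ?case
    proof (cases "m = 0")
      case False
      obtain k where k: "0 < k" "\<And>j. 0 < j \<Longrightarrow> j < k \<Longrightarrow> (p ^^ j) x \<in> X"
          "skip p X x = (p ^^ k) x"
        using skipE[OF skip_exists[OF p less(2)]] by metis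
      have "k \<le> m" using k(2)[of m] False less(3) by force
      then have "(p ^^ m) x = (p ^^ (m - k)) (skip p X x)"
        by (simp add: k(3) funpow_funpow)
      moreover have "(p ^^ (m - k)) (skip p X x) \<in> orb (skip p X) (skip p X x)"
        using less(1)[of "m - k" "skip p X x"] k(1) False less(3)
          skip_notin_in_orb(1)[OF p less(2)] calculation by simp
      ultimately show ?thesis using orb_step_subset[of "skip p X" x] by auto
    qed (use self_in_orb in simp)
  qed
  then show "orb p x - X \<subseteq> orb (skip p X) x" using x unfolding orb_def by blast
qed

lemma skip_cong:
  assumes "p y = q z" "\<And>u. u \<in> X \<Longrightarrow> p u = q u" "\<exists>k>0. (q ^^ k) z \<notin> X"
  shows "skip p X y = skip q X z"
proof -
  obtain k where k: "0 < k" "(q ^^ k) z \<notin> X" "\<And>j. 0 < j \<Longrightarrow> j < k \<Longrightarrow> (q ^^ j) z \<in> X"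
    "skip q X z = (q ^^ k) z" using skipE[OF assms(3)] by blast
  have eq: "(p ^^ j) y = (q ^^ j) z" if "0 < j" "j \<le> k" for j
    using that
  proof (induct j)
    case (Suc j)
    then show ?case using assms(1,2) k(3)[of j] by (cases "j = 0") auto
  qed simp
  have "skip p X y = (p ^^ k) y"
    by (rule skip_eqI) (use k eq in auto)
  then show ?thesis using eq[of k] k by simp
qed

lemma inj_on_skip:
  assumes p: "permutation p"
  shows "inj_on (skip p X) (- X)"
proof
  fix x y assume x: "x \<in> - X" and y: "y \<in> - X" and eq: "skip p X x = skip p X y"
  obtain k where k: "0 < k" "\<And>j. 0 < j \<Longrightarrow> j < k \<Longrightarrow> (p ^^ j) x \<in> X" "skip p X x = (p ^^ k) x"
    using skipE[OF skip_exists[OF p, of x X]] x by auto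
  obtain l where l: "0 < l" "\<And>j. 0 < j \<Longrightarrow> j < l \<Longrightarrow> (p ^^ j) y \<in> X" "skip p X y = (p ^^ l) y"
    using skipE[OF skip_exists[OF p, of y X]] y by auto
  have inj: "inj (p ^^ n)" for n
    using p by (simp add: permutation_bijective bij_is_inj)
  have kl: "(p ^^ k) x = (p ^^ l) y" using k l eq by simp
  have cancel: "u = (p ^^ (j - i)) v" if "(p ^^ i) u = (p ^^ j) v" "i < j" for u v i j
  proof -
    have "(p ^^ i) ((p ^^ (j - i)) v) = (p ^^ j) v" using that(2) by (simp add: funpow_funpow)
    then show ?thesis using that(1) injD[OF inj[of i]] by metis
  qed
  show "x = y"
  proof (cases k l rule: linorder_cases)
    case equal
    then show ?thesis using kl injD[OF inj[of k]] by simp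
  next
    case less
    then have "(p ^^ (l - k)) y \<in> X" using l(2) k(1) by simp
    then show ?thesis using cancel[OF kl less] x by simp
  next
    case greater
    then have "(p ^^ (k - l)) x \<in> X" using k(2) l(1) by simp
    then show ?thesis using cancel[OF kl[symmetric] greater] y by simp
  qed
qed

lemma skip_permutes:
  assumes "p permutes Y" "finite Y"
  shows "(\<lambda>x. if x \<in> Y - X then skip p X x else x) permutes (Y - X)"
proof (rule bij_imp_permutes)
  let ?f = "\<lambda>x. if x \<in> Y - X then skip p X x else x"
  have p: "permutation p" using assms by (auto simp: permutation_permutes)
  have im: "?f ` (Y - X) \<subseteq> Y - X"
    using skip_notin_in_orb[OF p] orb_subset_permutes[OF assms(1)] by fastforce
  have inj: "inj_on ?f (Y - X)"
    using inj_on_skip[OF p, of X] unfolding inj_on_def by auto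
  show "bij_betw ?f (Y - X) (Y - X)"
    using endo_inj_surj[OF _ im inj] assms(2) inj by (simp add: bij_betw_def)
qed auto

definition isolated_tokens :: "('d \<Rightarrow> 'd) \<Rightarrow> 'd set \<Rightarrow> 'd set \<Rightarrow> 'd set" where
  "isolated_tokens p D R = (\<lambda>v. SOME x. x \<in> v) ` {v. \<exists>x\<in>D. v = orb p x \<and> v \<subseteq> R}"

lemma rg_del_edges_simps[simp]:
  "rD (rg_del_edges G R) = rD G - R"
  "rI (rg_del_edges G R) = rI G \<union> isolated_tokens (rsig G) (rD G) R"
  "rsig (rg_del_edges G R) = (\<lambda>x. if x \<in> rD G - R then skip (rsig G) R x else x)"
  "ralp (rg_del_edges G R) = (\<lambda>x. if x \<in> rD G - R then ralp G x else x)"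
  by (simp_all add: rg_del_edges_def isolated_tokens_def)

lemma rg_dual_simps[simp]:
  "rD (rg_dual G) = rD G" "rI (rg_dual G) = rI G" "ralp (rg_dual G) = ralp G"
  "rsig (rg_dual G) = rg_phi G"
  by (simp_all add: rg_dual_def)

lemma rg_restrict_simps[simp]:
  "rD (rg_restrict G S) = rD G \<inter> S" "rI (rg_restrict G S) = rI G \<inter> S"
  "rsig (rg_restrict G S) = (\<lambda>x. if x \<in> rD G \<inter> S then rsig G x else x)"
  "ralp (rg_restrict G S) = (\<lambda>x. if x \<in> rD G \<inter> S then ralp G x else x)"
  by (simp_all add: rg_restrict_def)

lemma rg_con_edges_simps:
  "rD (rg_con_edges G R) = rD G - R"
  "rI (rg_con_edges G R) = rI G \<union> isolated_tokens (rg_phi G) (rD G) R"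
  "rsig (rg_con_edges G R) = rg_phi (rg_del_edges (rg_dual G) R)"
  "ralp (rg_con_edges G R) = (\<lambda>x. if x \<in> rD G - R then ralp G x else x)"
  by (simp_all add: rg_con_edges_def fun_eq_iff)

lemma rg_edges_dual[simp]: "rg_edges (rg_dual G) = rg_edges G"
  by (simp add: rg_edges_def)

lemma rg_verts_dual: "rg_verts (rg_dual G) = rg_faces G"
  by (simp add: rg_verts_def rg_faces_def)

lemma nf_eq_card_orbits:
  assumes "finite (rD G)" "finite (rI G)" "rD G \<inter> rI G = {}"
  shows "nf G = card {orb (rg_phi G) x | x. x \<in> rD G} + card (rI G)"
proof -
  have "{orb (rg_phi G) x | x. x \<in> rD G} \<inter> {{t} | t. t \<in> rI G} = {}"
  proof (rule ccontr)
    assume "{orb (rg_phi G) x | x. x \<in> rD G} \<inter> {{t} | t. t \<in> rI G} \<noteq> {}"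
    then obtain x t where "x \<in> rD G" "t \<in> rI G" "orb (rg_phi G) x = {t}" by blast
    then show False using self_in_orb[of x "rg_phi G"] assms(3) by auto
  qed
  moreover have "card {{t} | t. t \<in> rI G} = card (rI G)"
    unfolding setcompr_eq_image Collect_mem_eq by (rule card_image) (simp add: inj_on_def)
  ultimately show ?thesis
    unfolding nf_def rg_faces_def using assms(1,2) by (simp add: card_Un_disjoint setcompr_eq_image)
qed

lemma isolated_tokens_subset: "isolated_tokens p D R \<subseteq> R"
  unfolding isolated_tokens_def using someI[of "\<lambda>y. y \<in> orb p _", OF self_in_orb] by blast

lemma finite_isolated_tokens: "finite D \<Longrightarrow> finite (isolated_tokens p D R)"
  unfolding isolated_tokens_def by (rule finite_imageI, rule finite_subset[of _ "orb p ` D"]) auto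

lemma some_in_isolated_tokens:
  "x \<in> D \<Longrightarrow> orb p x \<subseteq> R \<Longrightarrow> (SOME y. y \<in> orb p x) \<in> isolated_tokens p D R"
  unfolding isolated_tokens_def by (rule imageI) blast

lemma wf_rgD:
  assumes "wf_rg G"
  shows "finite (rD G)" "finite (rI G)" "rD G \<inter> rI G = {}" "rsig G permutes rD G"
    "ralp G permutes rD G" "\<And>x. x \<in> rD G \<Longrightarrow> ralp G x \<noteq> x"
  using assms unfolding wf_rg_def by auto

lemma permutation_rsig: "wf_rg G \<Longrightarrow> permutation (rsig G)"
  by (rule permutes_imp_permutation[OF wf_rgD(1,4)])

lemma ralp_ralp: "wf_rg G \<Longrightarrow> ralp G (ralp G x) = x"
  by (cases "x \<in> rD G") (auto simp: wf_rg_def permutes_not_in)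

lemma rsig_notin: "wf_rg G \<Longrightarrow> x \<notin> rD G \<Longrightarrow> rsig G x = x"
  by (rule permutes_not_in[OF wf_rgD(4)])

lemma ralp_notin: "wf_rg G \<Longrightarrow> x \<notin> rD G \<Longrightarrow> ralp G x = x"
  by (rule permutes_not_in[OF wf_rgD(5)])

lemma rsig_in: "wf_rg G \<Longrightarrow> x \<in> rD G \<Longrightarrow> rsig G x \<in> rD G"
  by (simp add: permutes_in_image[OF wf_rgD(4)])

lemma ralp_in: "wf_rg G \<Longrightarrow> x \<in> rD G \<Longrightarrow> ralp G x \<in> rD G"
  by (simp add: permutes_in_image[OF wf_rgD(5)])

lemma rg_phi_permutes: "wf_rg G \<Longrightarrow> rg_phi G permutes rD G"
  unfolding rg_phi_def by (rule permutes_compose[OF wf_rgD(5) wf_rgD(4)])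

lemma permutation_rg_phi: "wf_rg G \<Longrightarrow> permutation (rg_phi G)"
  by (rule permutes_imp_permutation[OF wf_rgD(1) rg_phi_permutes])

lemma wf_rg_dual: "wf_rg G \<Longrightarrow> wf_rg (rg_dual G)"
  using rg_phi_permutes by (auto simp: wf_rg_def)

lemma rg_dual_dual: "wf_rg G \<Longrightarrow> rg_dual (rg_dual G) = G"
  by (simp add: rg_dual_def rg_phi_def comp_def ralp_ralp)

definition edge_closed :: "'d rgraph \<Rightarrow> 'd set \<Rightarrow> bool" where
  "edge_closed G R \<longleftrightarrow> R \<subseteq> rD G \<and> (\<forall>x\<in>R. ralp G x \<in> R)"

lemma edge_closed_dual[simp]: "edge_closed (rg_dual G) R = edge_closed G R"
  by (simp add: edge_closed_def)

lemma ralp_notin_edge_closed: "wf_rg G \<Longrightarrow> edge_closed G R \<Longrightarrow> x \<notin> R \<Longrightarrow> ralp G x \<notin> R"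
  by (metis edge_closed_def ralp_ralp)

lemma ralp_in_diff: "wf_rg G \<Longrightarrow> edge_closed G R \<Longrightarrow> x \<in> rD G - R \<Longrightarrow> ralp G x \<in> rD G - R"
  using ralp_in[of G x] ralp_notin_edge_closed[of G R x] by blast

lemma edge_closed_edge: "wf_rg G \<Longrightarrow> h \<in> rD G \<Longrightarrow> edge_closed G {h, ralp G h}"
  by (simp add: edge_closed_def ralp_in ralp_ralp)

lemma edge_closed_Union:
  assumes "wf_rg G" "A \<subseteq> rg_edges G"
  shows "edge_closed G (\<Union>A)"
  unfolding edge_closed_def
proof (intro conjI ballI subsetI)
  fix x assume "x \<in> \<Union>A"
  then obtain y where "y \<in> rD G" "x \<in> {y, ralp G y}" "{y, ralp G y} \<in> A"
    using assms(2) unfolding rg_edges_def by blast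
  then show "x \<in> rD G" "ralp G x \<in> \<Union>A"
    using ralp_in[OF assms(1)] ralp_ralp[OF assms(1)] by auto
qed

lemma involution_permutes:
  assumes "\<And>x. f (f x) = x" "\<And>x. x \<notin> S \<Longrightarrow> f x = x"
  shows "f permutes S"
  unfolding permutes_def by (metis assms)

lemma wf_rg_del_edges:
  assumes G: "wf_rg G" and R: "edge_closed G R"
  shows "wf_rg (rg_del_edges G R)"
proof -
  note w = wf_rgD[OF G]
  let ?G' = "rg_del_edges G R"
  have "isolated_tokens (rsig G) (rD G) R \<subseteq> R"
    by (rule isolated_tokens_subset)
  then have disj: "rD ?G' \<inter> rI ?G' = {}"
    using w(3) R unfolding edge_closed_def by auto
  have alp: "ralp ?G' permutes rD ?G'"
    by simp (rule involution_permutes, use ralp_in_diff[OF G R] ralp_ralp[OF G] in auto)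
  have invol: "ralp ?G' (ralp ?G' x) = x \<and> ralp ?G' x \<noteq> x" if "x \<in> rD ?G'" for x
    using that ralp_in_diff[OF G R, of x] ralp_ralp[OF G, of x] w(6)[of x] by simp
  show ?thesis
    unfolding wf_rg_def
    using disj alp invol w(1,2) finite_isolated_tokens[OF w(1)] skip_permutes[OF w(4,1)] by simp
qed

lemma wf_rg_con_edges: "wf_rg G \<Longrightarrow> edge_closed G R \<Longrightarrow> wf_rg (rg_con_edges G R)"
  unfolding rg_con_edges_def by (simp add: wf_rg_dual wf_rg_del_edges)

lemma rg_edges_del_edge:
  assumes G: "wf_rg G" and h: "h \<in> rD G"
  shows "rg_edges (rg_del_edges G {h, ralp G h}) = rg_edges G - {{h, ralp G h}}"
proof -
  have "rg_edges (rg_del_edges G {h, ralp G h}) = (\<lambda>x. {x, ralp G x}) ` (rD G - {h, ralp G h})"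
    unfolding rg_edges_def by auto
  also have "\<dots> = rg_edges G - {{h, ralp G h}}"
    unfolding rg_edges_def using ralp_ralp[OF G] by (auto simp: doubleton_eq_iff)
  finally show ?thesis .
qed

lemma rg_edges_con_edge:
  "wf_rg G \<Longrightarrow> h \<in> rD G \<Longrightarrow> rg_edges (rg_con_edges G {h, ralp G h}) = rg_edges G - {{h, ralp G h}}"
  using rg_edges_del_edge[OF wf_rg_dual] by (simp add: rg_con_edges_def)

section \<open>Cut face permutations\<close>

text \<open>Cutting the edges in \<^term>\<open>R\<close> into pairs of dangling half-edges gives the face
  permutation \<^term>\<open>cut_phi G R\<close>. Skipping \<^term>\<open>R\<close> along it yields the face permutation
  of \<^term>\<open>rg_del_edges G R\<close>, and its orbits inside \<^term>\<open>R\<close> are the vertices all of whose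
  edges were deleted.\<close>

definition cut_alp :: "'d rgraph \<Rightarrow> 'd set \<Rightarrow> 'd \<Rightarrow> 'd" where
  "cut_alp G R x = (if x \<in> R then x else ralp G x)"

definition cut_phi :: "'d rgraph \<Rightarrow> 'd set \<Rightarrow> 'd \<Rightarrow> 'd" where
  "cut_phi G R x = rsig G (cut_alp G R x)"

lemma cut_phi_in: "x \<in> R \<Longrightarrow> cut_phi G R x = rsig G x"
  by (simp add: cut_phi_def cut_alp_def)

lemma cut_phi_notin: "x \<notin> R \<Longrightarrow> cut_phi G R x = rg_phi G x"
  by (simp add: cut_phi_def cut_alp_def rg_phi_def)

lemma cut_alp_permutes:
  assumes G: "wf_rg G" and R: "edge_closed G R"
  shows "cut_alp G R permutes rD G"
proof (rule involution_permutes)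
  show "cut_alp G R (cut_alp G R x) = x" for x
    using ralp_notin_edge_closed[OF G R, of x] ralp_ralp[OF G, of x] by (simp add: cut_alp_def)
  show "cut_alp G R x = x" if "x \<notin> rD G" for x
    using that R ralp_notin[OF G] unfolding cut_alp_def edge_closed_def by auto
qed

lemma cut_phi_permutes: "wf_rg G \<Longrightarrow> edge_closed G R \<Longrightarrow> cut_phi G R permutes rD G"
  using permutes_compose[OF cut_alp_permutes wf_rgD(4)] by (simp add: cut_phi_def[abs_def] comp_def)

lemma cut_phi_del_edges:
  assumes G: "wf_rg G" and R: "edge_closed G R" and R': "R' \<inter> R = {}"
    and y: "y \<in> rD G - R"
  shows "cut_phi (rg_del_edges G R) R' y = skip (cut_phi G (R \<union> R')) R y"
proof -
  define z where "z = cut_alp G R' y"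
  have z: "z \<in> rD G - R"
    using y ralp_in_diff[OF G R] unfolding z_def cut_alp_def by auto
  have "cut_alp (rg_del_edges G R) R' y = z"
    using y by (simp add: cut_alp_def z_def)
  then have "cut_phi (rg_del_edges G R) R' y = skip (rsig G) R z"
    using z by (simp add: cut_phi_def)
  also have "\<dots> = skip (cut_phi G (R \<union> R')) R y"
  proof (rule skip_cong[symmetric])
    show "cut_phi G (R \<union> R') y = rsig G z"
      using y by (simp add: cut_phi_def cut_alp_def z_def)
    show "cut_phi G (R \<union> R') u = rsig G u" if "u \<in> R" for u
      using that by (simp add: cut_phi_in)
    show "\<exists>k>0. (rsig G ^^ k) z \<notin> R"
      using skip_exists[OF permutation_rsig[OF G]] z by blast
  qed
  finally show ?thesis .
qed

lemma rg_phi_del_edges: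
  assumes "wf_rg G" "edge_closed G R" "y \<in> rD G - R"
  shows "rg_phi (rg_del_edges G R) y = skip (cut_phi G R) R y"
  using cut_phi_del_edges[OF assms(1,2) _ assms(3), of "{}"]
  by (simp add: cut_phi_notin[of _ "{}", symmetric])

lemma cut_phi_con_edges:
  assumes G: "wf_rg G" and R: "edge_closed G R" and R': "R' \<inter> R = {}"
    and y: "y \<in> rD G - R"
  shows "cut_phi (rg_con_edges G R) R' y = skip (cut_phi G R') R y"
proof -
  define z where "z = cut_alp G R' y"
  have z: "z \<in> rD G - R" "ralp G z \<in> rD G - R"
    using y ralp_in_diff[OF G R] unfolding z_def cut_alp_def by auto
  have "cut_alp (rg_con_edges G R) R' y = z"
    using y by (simp add: cut_alp_def z_def rg_con_edges_simps)
  then have "cut_phi (rg_con_edges G R) R' y = rsig (rg_con_edges G R) z"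
    by (simp add: cut_phi_def)
  also have "\<dots> = skip (rg_phi G) R (ralp G z)"
    using z by (simp add: rg_con_edges_simps rg_phi_def[of "rg_del_edges _ _"])
  also have "\<dots> = skip (cut_phi G R') R y"
  proof (rule skip_cong[symmetric])
    show "cut_phi G R' y = rg_phi G (ralp G z)"
      using ralp_ralp[OF G] by (simp add: cut_phi_def rg_phi_def z_def)
    show "cut_phi G R' u = rg_phi G u" if "u \<in> R" for u
      using that R' by (auto intro: cut_phi_notin)
    show "\<exists>k>0. (rg_phi G ^^ k) (ralp G z) \<notin> R"
      using skip_exists[OF permutation_rg_phi[OF G]] z by blast
  qed
  finally show ?thesis .
qed

definition merge_into :: "'b \<Rightarrow> 'b \<Rightarrow> 'b \<Rightarrow> 'b" where
  "merge_into a0 a1 b = (if b = a1 then a0 else b)"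

definition merged_weight :: "('b \<Rightarrow> nat) \<Rightarrow> 'b \<Rightarrow> 'b \<Rightarrow> 'b \<Rightarrow> nat" where
  "merged_weight w a0 a1 = w(a0 := w a0 + (if a0 = a1 then 1 else w a1))"

lemma wf_pkgD:
  assumes "wf_pkg P"
  shows "wf_rg (prg P)" "plv P (rsig (prg P) x) = plv P x" "plf P (rg_phi (prg P) x) = plf P x"
proof -
  show G: "wf_rg (prg P)" using assms unfolding wf_pkg_def by auto
  show "plv P (rsig (prg P) x) = plv P x"
    using assms rsig_notin[OF G, of x] unfolding wf_pkg_def by (cases "x \<in> rD (prg P)") auto
  show "plf P (rg_phi (prg P) x) = plf P x"
    using assms rsig_notin[OF G] ralp_notin[OF G, of x] unfolding wf_pkg_def rg_phi_def
    by (cases "x \<in> rD (prg P)") auto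
qed

lemma pdual_simps[simp]:
  "prg (pdual P) = rg_dual (prg P)" "plv (pdual P) = plf P" "pwv (pdual P) = pwf P"
  "plf (pdual P) = plv P" "pwf (pdual P) = pwv P"
  by (simp_all add: pdual_def)

lemma pdual_pdual: "wf_rg (prg P) \<Longrightarrow> pdual (pdual P) = P"
  by (cases P) (simp add: pdual_def rg_dual_dual)

lemma wf_pkg_pdual:
  assumes "wf_pkg P"
  shows "wf_pkg (pdual P)"
proof -
  note w = wf_pkgD[OF assms]
  have "plv P (rg_phi (rg_dual (prg P)) x) = plv P x" for x
    using w(2)[of x] ralp_ralp[OF w(1), of x] by (simp add: rg_phi_def)
  then show ?thesis unfolding wf_pkg_def using w wf_rg_dual[OF w(1)] by simp
qed

lemma pdelete_simps[simp]:
  "prg (pdelete P h) = rg_del_edges (prg P) {h, ralp (prg P) h}"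
  "plv (pdelete P h) = plv P" "pwv (pdelete P h) = pwv P"
  "plf (pdelete P h) = (\<lambda>x. merge_into (plf P h) (plf P (ralp (prg P) h)) (plf P x))"
  "pwf (pdelete P h) = merged_weight (pwf P) (plf P h) (plf P (ralp (prg P) h))"
  by (auto simp: pdelete_def Let_def merge_into_def merged_weight_def fun_eq_iff)

lemma pcontract_simps[simp]:
  "prg (pcontract P h) = rg_con_edges (prg P) {h, ralp (prg P) h}"
  "plv (pcontract P h) = (\<lambda>x. merge_into (plv P h) (plv P (ralp (prg P) h)) (plv P x))"
  "pwv (pcontract P h) = merged_weight (pwv P) (plv P h) (plv P (ralp (prg P) h))"
  "plf (pcontract P h) = plf P" "pwf (pcontract P h) = pwf P"
  by (simp_all add: pcontract_def rg_con_edges_def)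

lemma wf_pkg_pdelete:
  assumes P: "wf_pkg P" and h: "h \<in> rD (prg P)"
  shows "wf_pkg (pdelete P h)"
proof -
  let ?G = "prg P" let ?e = "{h, ralp (prg P) h}"
  let ?lf = "\<lambda>x. merge_into (plf P h) (plf P (ralp ?G h)) (plf P x)"
  note w = wf_pkgD[OF P]
  have e: "edge_closed ?G ?e" by (rule edge_closed_edge[OF w(1) h])
  have "?lf (cut_phi ?G ?e y) = ?lf y" for y
  proof (cases "y \<in> ?e")
    case True
    then have "plf P (cut_phi ?G ?e y) = plf P (ralp ?G y)"
      using w(3)[of "ralp ?G y"] by (simp add: cut_phi_in rg_phi_def ralp_ralp[OF w(1)])
    then show ?thesis using True ralp_ralp[OF w(1), of h] by (auto simp: merge_into_def)
  qed (simp add: cut_phi_notin w(3))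
  then have "?lf (rg_phi (rg_del_edges ?G ?e) x) = ?lf x" if "x \<in> rD ?G - ?e" for x
    using rg_phi_del_edges[OF w(1) e that] skip_invariant[of ?lf] by metis
  moreover have "plv P (skip (rsig ?G) ?e x) = plv P x" for x
    by (rule skip_invariant) (rule w(2))
  ultimately show ?thesis
    unfolding wf_pkg_def using wf_rg_del_edges[OF w(1) e] by simp
qed

lemma wf_pkg_pcontract: "wf_pkg P \<Longrightarrow> h \<in> rD (prg P) \<Longrightarrow> wf_pkg (pcontract P h)"
  unfolding pcontract_def by (simp add: wf_pkg_pdelete wf_pkg_pdual)

lemma blocksV_del_edges:
  assumes P: "wf_pkg P" and R: "edge_closed (prg P) R"
  shows "plv P ` (rD (rg_del_edges (prg P) R) \<union> rI (rg_del_edges (prg P) R)) = blocksV P"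
proof -
  let ?G = "prg P" let ?v = "\<lambda>x. orb (rsig ?G) x" let ?tk = "isolated_tokens (rsig ?G) (rD ?G) R"
  note w = wf_pkgD[OF P]
  have RD: "R \<subseteq> rD ?G" using R by (simp add: edge_closed_def)
  have "plv P ` ((rD ?G - R) \<union> (rI ?G \<union> ?tk)) = plv P ` (rD ?G \<union> rI ?G)"
  proof (rule image_eq_if_witnessed)
    show "(rD ?G - R) \<union> (rI ?G \<union> ?tk) \<subseteq> rD ?G \<union> rI ?G"
      using RD isolated_tokens_subset[of "rsig ?G" "rD ?G" R] by blast
    fix x assume "x \<in> rD ?G \<union> rI ?G - ((rD ?G - R) \<union> (rI ?G \<union> ?tk))"
    then have x: "x \<in> R" by blast
    show "\<exists>y \<in> (rD ?G - R) \<union> (rI ?G \<union> ?tk). plv P y = plv P x"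
    proof (cases "?v x \<subseteq> R")
      case True
      then have "(SOME y. y \<in> ?v x) \<in> ?tk" using x RD by (intro some_in_isolated_tokens) blast+
      then show ?thesis using orb_invariant[of "plv P", OF w(2) some_in_orb] by blast
    next
      case False
      then obtain y where "y \<in> ?v x" "y \<notin> R" by blast
      moreover have "y \<in> rD ?G"
        using calculation(1) orb_subset_permutes[OF wf_rgD(4)[OF w(1)]] x RD by blast
      ultimately show ?thesis using orb_invariant[of "plv P", OF w(2)] by blast
    qed
  qed
  then show ?thesis unfolding blocksV_def by simp
qed

lemma blocksV_pcontract:
  assumes P: "wf_pkg P" and h: "h \<in> rD (prg P)"
  shows "blocksV (pcontract P h) = merge_into (plv P h) (plv P (ralp (prg P) h)) ` blocksV P"
proof -
  let ?G = "prg P" let ?D = "rD ?G" let ?h' = "ralp ?G h" let ?e = "{h, ?h'}"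
  let ?f = "\<lambda>x. merge_into (plv P h) (plv P ?h') (plv P x)"
  let ?tk = "isolated_tokens (rg_phi ?G) ?D ?e"
  note w = wf_pkgD[OF P]
  have h': "?h' \<in> ?D" "ralp ?G ?h' = h" using ralp_in[OF w(1) h] ralp_ralp[OF w(1)] by auto
  have "?f ` ((?D - ?e) \<union> (rI ?G \<union> ?tk)) = ?f ` (?D \<union> rI ?G)"
  proof (rule image_eq_if_witnessed)
    show "(?D - ?e) \<union> (rI ?G \<union> ?tk) \<subseteq> ?D \<union> rI ?G"
      using isolated_tokens_subset[of "rg_phi ?G" ?D ?e] h h'(1) by blast
    fix x assume "x \<in> ?D \<union> rI ?G - ((?D - ?e) \<union> (rI ?G \<union> ?tk))"
    then have fx: "?f x = plv P h" by (auto simp: merge_into_def)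
    text \<open>Unless \<^term>\<open>rsig\<close> leads out of the contracted edge, the edge forms a whole
      boundary component, which survives as an isolated vertex.\<close>
    show "\<exists>y \<in> (?D - ?e) \<union> (rI ?G \<union> ?tk). ?f y = ?f x"
    proof (cases "rsig ?G h \<in> ?e \<and> rsig ?G ?h' \<in> ?e")
      case True
      then have "orb (rg_phi ?G) h \<subseteq> ?e"
        by (intro orb_subset_if_closed) (auto simp: rg_phi_def h'(2))
      then have "(SOME y. y \<in> orb (rg_phi ?G) h) \<in> ?tk \<inter> ?e"
        using some_in_isolated_tokens[OF h] some_in_orb[of "rg_phi ?G" h] by blast
      then show ?thesis using fx by (auto simp: merge_into_def)
    next
      case False
      then show ?thesis
        using fx rsig_in[OF w(1) h] rsig_in[OF w(1) h'(1)] w(2)[of h] w(2)[of ?h']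
        by (auto simp: merge_into_def)
    qed
  qed
  then show ?thesis
    unfolding blocksV_def pcontract_simps rg_con_edges_simps by (simp add: image_image)
qed

lemma orb_eq_if_subset:
  assumes "orb f x \<subseteq> X" "\<And>u. u \<in> X \<Longrightarrow> f u = g u"
  shows "orb f x = orb g x"
proof (rule orb_cong[of x "orb f x"])
  fix u assume "u \<in> orb f x"
  then show "f u = g u" "g u \<in> orb f x"
    using assms orb_trans[OF _ step_in_orb, of u f x] by auto
qed (rule self_in_orb)

lemma isolated_tokens_cong:
  assumes "\<And>u. u \<in> X \<Longrightarrow> p0 u = p u"
  shows "isolated_tokens p0 Y X = isolated_tokens p Y X"
proof -
  have "orb p0 x \<subseteq> X \<longleftrightarrow> orb p x \<subseteq> X" "orb p0 x \<subseteq> X \<Longrightarrow> orb p0 x = orb p x" for x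
    using orb_eq_if_subset[of p0 x X p] orb_eq_if_subset[of p x X p0] assms by fastforce+
  then have "{v. \<exists>x\<in>Y. v = orb p0 x \<and> v \<subseteq> X} = {v. \<exists>x\<in>Y. v = orb p x \<and> v \<subseteq> X}"
    by metis
  then show ?thesis unfolding isolated_tokens_def by simp
qed

lemma card_filter_partition: "finite S \<Longrightarrow> card {c \<in> S. P c} + card {c \<in> S. \<not> P c} = card S"
  by (subst card_Un_disjoint[symmetric]) (auto intro: arg_cong[where f = card])

lemma card_filter_Un_disjoint:
  "finite A \<Longrightarrow> finite B \<Longrightarrow> A \<inter> B = {} \<Longrightarrow>
    card {t \<in> A \<union> B. Q t} = card {t \<in> A. Q t} + card {t \<in> B. Q t}"
  by (subst card_Un_disjoint[symmetric]) (auto intro: arg_cong[where f = card])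

lemma card_isolated_filter:
  assumes "wf_rg G" and "R \<subseteq> rD G"
  shows "card {t \<in> rI G \<union> isolated_tokens p (rD G) R. Q t} =
    card {t \<in> rI G. Q t} + card {t \<in> isolated_tokens p (rD G) R. Q t}"
  using wf_rgD[OF assms(1)] isolated_tokens_subset[of p "rD G" R] assms(2)
  by (intro card_filter_Un_disjoint finite_isolated_tokens) auto

context
  fixes p :: "'d \<Rightarrow> 'd" and Y X :: "'d set" and Q :: "'d \<Rightarrow> bool"
  assumes perm: "p permutes Y" and fin: "finite Y" and Q: "\<And>y. Q (p y) = Q y"
begin

lemma orbits_filter_finite: "finite {orb p y | y. y \<in> Y \<and> Q y}"
  by (rule finite_subset[of _ "orb p ` Y"]) (auto simp: fin)

lemma card_orbits_skip:
  assumes p': "\<And>y. y \<in> Y - X \<Longrightarrow> Q y \<Longrightarrow> p' y = skip p X y"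
  shows "card {orb p' y | y. y \<in> Y - X \<and> Q y} = card {c \<in> {orb p y | y. y \<in> Y \<and> Q y}. \<not> c \<subseteq> X}"
proof -
  let ?Os = "{c \<in> {orb p y | y. y \<in> Y \<and> Q y}. \<not> c \<subseteq> X}"
  have perm': "permutation p" using perm fin by (auto simp: permutation_permutes)
  have skip_orb: "orb p' y = orb p y - X" if "y \<in> Y - X" "Q y" for y
  proof -
    let ?Z = "{z \<in> Y - X. Q z}"
    have "skip p X u \<in> ?Z" if "u \<in> ?Z" for u
      using that skip_notin_in_orb[OF perm', of u X] orb_subset_permutes[OF perm, of u]
        skip_invariant[of Q p, OF Q] by auto
    then have "orb p' y = orb (skip p X) y"
      using p' that by (intro orb_cong[of y ?Z]) auto
    then show ?thesis using orb_skip[OF perm'] that by simp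
  qed
  have "{orb p' y | y. y \<in> Y - X \<and> Q y} = (\<lambda>c. c - X) ` ?Os"
  proof (intro equalityI subsetI)
    fix c assume "c \<in> {orb p' y | y. y \<in> Y - X \<and> Q y}"
    then obtain y where y: "y \<in> Y - X" "Q y" "c = orb p' y" by blast
    then have "orb p y \<in> ?Os" using self_in_orb[of y p] by blast
    then show "c \<in> (\<lambda>c. c - X) ` ?Os" using skip_orb y by blast
  next
    fix c' assume "c' \<in> (\<lambda>c. c - X) ` ?Os"
    then obtain y where y: "y \<in> Y" "Q y" "c' = orb p y - X" "\<not> orb p y \<subseteq> X" by blast
    then obtain z where z: "z \<in> orb p y" "z \<notin> X" by blast
    have "orb p z = orb p y" by (rule orb_eq_if_mem[OF perm' z(1)])
    moreover have "z \<in> Y" using orb_subset_permutes[OF perm y(1)] z(1) by blast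
    moreover have "Q z" using orb_invariant[of Q p, OF Q z(1)] y(2) by simp
    ultimately show "c' \<in> {orb p' y | y. y \<in> Y - X \<and> Q y}" using skip_orb[of z] y z by auto
  qed
  moreover have "inj_on (\<lambda>c. c - X) ?Os"
  proof
    fix c1 c2 assume c1: "c1 \<in> ?Os" and c2: "c2 \<in> ?Os" and eq: "c1 - X = c2 - X"
    obtain z where "z \<in> c1" "z \<notin> X" using c1 by blast
    then show "c1 = c2" using eq c1 c2 orb_eq_if_common[OF perm', of z] by blast
  qed
  ultimately show ?thesis by (simp add: card_image)
qed

lemma card_isolated_tokens:
  "card {t \<in> isolated_tokens p Y X. Q t} = card {c \<in> {orb p y | y. y \<in> Y \<and> Q y}. c \<subseteq> X}"
proof -
  let ?Os = "{c \<in> {orb p y | y. y \<in> Y \<and> Q y}. c \<subseteq> X}"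
  let ?pick = "\<lambda>v. SOME x. x \<in> v"
  have perm': "permutation p" using perm fin by (auto simp: permutation_permutes)
  have Q_pick: "Q (?pick (orb p y)) = Q y" for y
    using orb_invariant[of Q p, OF Q some_in_orb] .
  have "{t \<in> isolated_tokens p Y X. Q t} = ?pick ` ?Os"
    unfolding isolated_tokens_def using Q_pick by blast
  moreover have "inj_on ?pick ?Os"
  proof
    fix c1 c2 assume c: "c1 \<in> ?Os" "c2 \<in> ?Os" "?pick c1 = ?pick c2"
    then obtain y1 y2 where "c1 = orb p y1" "c2 = orb p y2" by blast
    then show "c1 = c2"
      using c(3) some_in_orb[of p y1] some_in_orb[of p y2] orb_eq_if_common[OF perm'] by metis
  qed
  ultimately show ?thesis by (simp add: card_image)
qed

lemma card_orbits_skip_plus_tokens: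
  assumes "\<And>y. y \<in> Y - X \<Longrightarrow> Q y \<Longrightarrow> p' y = skip p X y"
    and "\<And>u. u \<in> X \<Longrightarrow> p0 u = p u"
  shows "card {orb p' y | y. y \<in> Y - X \<and> Q y} + card {t \<in> isolated_tokens p0 Y X. Q t} =
         card {orb p y | y. y \<in> Y \<and> Q y}"
proof -
  have "card {t \<in> isolated_tokens p0 Y X. Q t} = card {c \<in> {orb p y | y. y \<in> Y \<and> Q y}. c \<subseteq> X}"
    using isolated_tokens_cong[OF assms(2)] card_isolated_tokens by simp
  then show ?thesis
    using card_orbits_skip[OF assms(1)] card_filter_partition[OF orbits_filter_finite, of "\<lambda>c. \<not> c \<subseteq> X"]
    by simp
qed

end

section \<open>q1 through the block multigraph\<close>

text \<open>\<^term>\<open>q1_eval\<close> computes \<^term>\<open>q1\<close> from the block multigraph (vertex set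
  \<^term>\<open>B\<close>, one edge between \<^term>\<open>lab x\<close> and \<^term>\<open>lab (a x)\<close> for each dart pair
  \<^term>\<open>{x, a x}\<close> in \<^term>\<open>X\<close>), the block weights \<^term>\<open>w\<close> and a face count
  \<^term>\<open>f\<close> for each connected component.\<close>

definition lab_link :: "'d set \<Rightarrow> ('d \<Rightarrow> 'd) \<Rightarrow> ('d \<Rightarrow> 'b) \<Rightarrow> ('b \<times> 'b) set" where
  "lab_link X a lab = {(lab x, lab (a x)) | x. x \<in> X}"

definition lab_comps :: "'d set \<Rightarrow> ('d \<Rightarrow> 'd) \<Rightarrow> ('d \<Rightarrow> 'b) \<Rightarrow> 'b set \<Rightarrow> 'b set set" where
  "lab_comps X a lab B = {{b'. (b, b') \<in> (lab_link X a lab)\<^sup>*} | b. b \<in> B}"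

definition lab_edge_count :: "'d set \<Rightarrow> ('d \<Rightarrow> 'd) \<Rightarrow> ('d \<Rightarrow> 'b) \<Rightarrow> 'b set \<Rightarrow> nat" where
  "lab_edge_count X a lab K = card {{x, a x} | x. x \<in> X \<and> lab x \<in> K}"

definition q1_term :: "real \<Rightarrow> nat list \<Rightarrow> nat \<Rightarrow> nat \<Rightarrow> nat \<Rightarrow> nat \<Rightarrow> real" where
  "q1_term N ns e c f w = N powi (int e - int c) *
     sum_list (map (\<lambda>n. real n powi (int f - int e + int c - int w)) ns)"

definition q1_eval :: "real \<Rightarrow> nat list \<Rightarrow> 'd set \<Rightarrow> ('d \<Rightarrow> 'd) \<Rightarrow> ('d \<Rightarrow> 'b) \<Rightarrow> ('b \<Rightarrow> nat) \<Rightarrow>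
    'b set \<Rightarrow> ('b set \<Rightarrow> nat) \<Rightarrow> real" where
  "q1_eval N ns X a lab w B f = (\<Prod>K\<in>lab_comps X a lab B.
     q1_term N ns (lab_edge_count X a lab K) (card K) (f K) (\<Sum>b\<in>K. w b))"

lemma q1conn_eq_q1_term:
  "q1conn N ns P = q1_term N ns (ne (prg P)) (card (blocksV P)) (nf (prg P)) (totV P)"
  unfolding q1conn_def q1_term_def by simp

lemma lab_comp_closed:
  assumes "K \<in> lab_comps X a lab B" "x \<in> X" "lab x \<in> K"
  shows "lab (a x) \<in> K"
proof -
  have "(lab x, lab (a x)) \<in> lab_link X a lab" using assms(2) unfolding lab_link_def by blast
  then show ?thesis using assms(1,3) unfolding lab_comps_def by (auto intro: rtrancl_into_rtrancl)
qed

lemma lab_comp_subset: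
  assumes "K \<in> lab_comps X a lab B"
  shows "K \<subseteq> B \<union> lab ` a ` X"
proof
  fix c assume c: "c \<in> K"
  obtain b where b: "b \<in> B" "K = {b'. (b, b') \<in> (lab_link X a lab)\<^sup>*}"
    using assms unfolding lab_comps_def by blast
  then have "(b, c) \<in> (lab_link X a lab)\<^sup>*" using c by blast
  then show "c \<in> B \<union> lab ` a ` X"
    by (cases rule: rtranclE) (use b in \<open>auto simp: lab_link_def\<close>)
qed

lemma q1_eval_cong:
  assumes "\<And>x. x \<in> X \<Longrightarrow> a x = a' x" "\<And>K. K \<in> lab_comps X a lab B \<Longrightarrow> f K = f' K"
  shows "q1_eval N ns X a lab w B f = q1_eval N ns X a' lab w B f'"
proof -
  have "lab_link X a lab = lab_link X a' lab" unfolding lab_link_def using assms(1) by force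
  then have c: "lab_comps X a lab B = lab_comps X a' lab B" unfolding lab_comps_def by simp
  have "lab_edge_count X a lab K = lab_edge_count X a' lab K" for K
    unfolding lab_edge_count_def using assms(1) by (metis (no_types, lifting))
  then show ?thesis unfolding q1_eval_def c[symmetric] using assms(2) by (intro prod.cong) auto
qed

text \<open>Number of boundary components of \<^term>\<open>rg_del_edges (prg P) R\<close> whose darts carry
  labels in \<^term>\<open>K\<close>.\<close>

definition del_face_count :: "('d, 'b, 'c) pkg \<Rightarrow> 'd set \<Rightarrow> 'b set \<Rightarrow> nat" where
  "del_face_count P R K =
     card {orb (cut_phi (prg P) R) y | y. y \<in> rD (prg P) \<and> plv P y \<in> K} +
     card {t \<in> rI (prg P). plv P t \<in> K}"

lemma cut_phi_lab_comp_invariant: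
  assumes P: "wf_pkg P" and R: "edge_closed (prg P) R"
    and K: "K \<in> lab_comps (rD (prg P) - R) (ralp (prg P)) (plv P) B"
  shows "(plv P (cut_phi (prg P) R y) \<in> K) = (plv P y \<in> K)"
proof -
  let ?G = "prg P"
  note w = wf_pkgD[OF P]
  have "plv P (cut_phi ?G R y) = plv P (cut_alp ?G R y)" unfolding cut_phi_def by (rule w(2))
  moreover have "(plv P (ralp ?G y) \<in> K) = (plv P y \<in> K)" if "y \<in> rD ?G - R"
    using lab_comp_closed[OF K that] lab_comp_closed[OF K ralp_in_diff[OF w(1) R that]]
      ralp_ralp[OF w(1), of y] by auto
  ultimately show ?thesis by (cases "y \<in> rD ?G") (auto simp: cut_alp_def ralp_notin[OF w(1)])
qed

context
  fixes P :: "('d, 'b, 'c) pkg" and R :: "'d set" and K :: "'b set"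
  assumes P: "wf_pkg P" and R: "edge_closed (prg P) R"
    and K: "K \<in> lab_comps (rD (prg P) - R) (ralp (prg P)) (plv P) (blocksV P)"
begin

abbreviation "comp_graph \<equiv> rg_restrict (rg_del_edges (prg P) R) {x. plv P x \<in> K}"

lemma ne_comp_graph: "ne comp_graph = lab_edge_count (rD (prg P) - R) (ralp (prg P)) (plv P) K"
proof -
  have "rg_edges comp_graph = (\<lambda>h. {h, ralp comp_graph h}) ` rD comp_graph"
    unfolding rg_edges_def by blast
  also have "\<dots> = (\<lambda>h. {h, ralp (prg P) h}) ` {x. x \<in> rD (prg P) - R \<and> plv P x \<in> K}"
    by (rule image_cong) auto
  finally show ?thesis unfolding ne_def lab_edge_count_def by (simp add: setcompr_eq_image)
qed

lemma nf_comp_graph: "nf comp_graph = del_face_count P R K"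
proof -
  let ?G = "prg P" let ?D = "rD ?G" let ?Q = "\<lambda>y. plv P y \<in> K"
  let ?tk = "isolated_tokens (rsig ?G) ?D R"
  note w = wf_pkgD[OF P]
  note wg = wf_rgD[OF w(1)]
  have RD: "R \<subseteq> ?D" using R by (simp add: edge_closed_def)
  have D: "rD comp_graph = {y. y \<in> ?D - R \<and> ?Q y}" by auto
  have I: "rI comp_graph = {t \<in> rI ?G \<union> ?tk. ?Q t}" by auto
  have "finite (rD comp_graph)" "finite (rI comp_graph)" "rD comp_graph \<inter> rI comp_graph = {}"
    using wg(1-3) isolated_tokens_subset[of "rsig ?G" ?D R] finite_isolated_tokens[OF wg(1)] by auto
  from nf_eq_card_orbits[OF this]
  have "nf comp_graph = card {orb (rg_phi comp_graph) y | y. y \<in> ?D - R \<and> ?Q y} +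
      card {t \<in> rI ?G \<union> ?tk. ?Q t}"
    unfolding D I by simp
  then have "nf comp_graph = card {orb (rg_phi comp_graph) y | y. y \<in> ?D - R \<and> ?Q y} +
      card {t \<in> rI ?G. ?Q t} + card {t \<in> ?tk. ?Q t}"
    unfolding card_isolated_filter[OF w(1) RD] by simp
  moreover have "card {orb (rg_phi comp_graph) y | y. y \<in> ?D - R \<and> ?Q y} + card {t \<in> ?tk. ?Q t} =
      card {orb (cut_phi ?G R) y | y. y \<in> ?D \<and> ?Q y}"
  proof (rule card_orbits_skip_plus_tokens[OF cut_phi_permutes[OF w(1) R] wg(1)])
    show "?Q (cut_phi ?G R y) = ?Q y" for y by (rule cut_phi_lab_comp_invariant[OF P R K])
    show "rsig ?G u = cut_phi ?G R u" if "u \<in> R" for u using that by (simp add: cut_phi_in)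
    fix y assume y: "y \<in> ?D - R" "?Q y"
    have "ralp ?G y \<in> ?D - R" "?Q (ralp ?G y)"
      using ralp_in_diff[OF w(1) R y(1)] lab_comp_closed[OF K y(1)] y(2) by auto
    moreover have "?Q (skip (rsig ?G) R (ralp ?G y))"
      using calculation(2) skip_invariant[of "plv P" "rsig ?G", OF w(2)] by simp
    ultimately have "rg_phi comp_graph y = rg_phi (rg_del_edges ?G R) y"
      using y by (simp add: rg_phi_def)
    then show "rg_phi comp_graph y = skip (cut_phi ?G R) R y"
      using rg_phi_del_edges[OF w(1) R y(1)] by simp
  qed
  ultimately show ?thesis unfolding del_face_count_def by simp
qed

lemma blocksV_comp_graph: "blocksV (P\<lparr>prg := comp_graph\<rparr>) = K"
proof -
  have "K \<subseteq> blocksV P"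
    using lab_comp_subset[OF K] ralp_in[OF wf_pkgD(1)[OF P]] unfolding blocksV_def by blast
  then show ?thesis
    using blocksV_del_edges[OF P R] unfolding blocksV_def by (auto simp: Int_Un_distrib2)
qed

end

lemma q1_del_edges_eq_eval:
  assumes P: "wf_pkg P" and R: "edge_closed (prg P) R"
  shows "q1 N ns (P\<lparr>prg := rg_del_edges (prg P) R\<rparr>) =
    q1_eval N ns (rD (prg P) - R) (ralp (prg P)) (plv P) (pwv P) (blocksV P) (del_face_count P R)"
proof -
  let ?G = "prg P" let ?Q = "P\<lparr>prg := rg_del_edges ?G R\<rparr>"
  have "linkV ?Q = (\<lambda>h. (plv P h, plv P (ralp (rg_del_edges ?G R) h))) ` rD (rg_del_edges ?G R)"
    unfolding linkV_def by (simp add: setcompr_eq_image del: rg_del_edges_simps)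
  also have "\<dots> = lab_link (rD ?G - R) (ralp ?G) (plv P)"
    unfolding lab_link_def setcompr_eq_image by (rule image_cong) auto
  finally have "compsV ?Q = lab_comps (rD ?G - R) (ralp ?G) (plv P) (blocksV P)"
    unfolding compsV_def lab_comps_def using blocksV_del_edges[OF P R] by (simp add: blocksV_def)
  then show ?thesis
    unfolding q1_def q1_eval_def
  proof (intro prod.cong)
    fix K assume K: "K \<in> lab_comps (rD ?G - R) (ralp ?G) (plv P) (blocksV P)"
    have "subV ?Q K = P\<lparr>prg := rg_restrict (rg_del_edges ?G R) {x. plv P x \<in> K}\<rparr>"
      unfolding subV_def by simp
    then show "q1conn N ns (subV ?Q K) = q1_term N ns (lab_edge_count (rD ?G - R) (ralp ?G) (plv P) K)
        (card K) (del_face_count P R K) (\<Sum>b\<in>K. pwv P b)"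
      unfolding q1conn_eq_q1_term totV_def
      using ne_comp_graph[OF P R K] nf_comp_graph[OF P R K] blocksV_comp_graph[OF P R K] by simp
  qed
qed

section \<open>Contracting one edge of the block multigraph\<close>

lemma q1_term_contract_loop:
  assumes "N \<noteq> 0" "1 \<le> e"
  shows "q1_term N ns e c f w = N * q1_term N ns (e - 1) c f (w + 1)"
proof -
  have "int e - int c = 1 + (int (e - 1) - int c)" using assms(2) by simp
  then have N: "N powi (int e - int c) = N powi 1 * N powi (int (e - 1) - int c)"
    using power_int_add[of N 1 "int (e - 1) - int c"] assms(1) by presburger
  have n: "int f - int e + int c - int w = int f - int (e - 1) + int c - int (w + 1)"
    using assms(2) by simp
  show ?thesis unfolding q1_term_def by (simp only: N n) (simp add: mult.assoc)
qed

lemma q1_term_contract_link: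
  assumes "1 \<le> e" "1 \<le> c"
  shows "q1_term N ns e c f w = q1_term N ns (e - 1) (c - 1) f w"
  using assms by (simp add: q1_term_def algebra_simps)

lemma merge_into_idem: "merge_into a0 a1 (merge_into a0 a1 b) = merge_into a0 a1 b"
  by (simp add: merge_into_def)

lemma merge_into_eq_iff: "merge_into a0 a1 b = merge_into a0 a1 c \<longleftrightarrow> b = c \<or> {b, c} = {a0, a1}"
  by (auto simp: merge_into_def)

lemma merge_into_image_notin: "a0 \<notin> K \<Longrightarrow> a1 \<notin> K \<Longrightarrow> merge_into a0 a1 ` K = K"
  by (auto simp: merge_into_def)

lemma sum_merged_weight_notin:
  "a0 \<notin> K \<Longrightarrow> (\<Sum>b\<in>K. merged_weight w a0 a1 b) = (\<Sum>b\<in>K. w b)"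
  unfolding merged_weight_def by (rule sum.cong) auto

lemma merge_into_image_in:
  assumes "a0 \<in> K" "a1 \<in> K"
  shows "merge_into a0 a1 ` K = (if a0 = a1 then K else K - {a1})"
  using assms by (auto simp: merge_into_def image_iff)

lemma sum_merged_weight_in:
  assumes "finite K" "a0 \<in> K" "a1 \<in> K"
  shows "(\<Sum>b\<in>merge_into a0 a1 ` K. merged_weight w a0 a1 b) = (\<Sum>b\<in>K. w b) + (if a0 = a1 then 1 else 0)"
proof (cases "a0 = a1")
  case True
  have "(\<Sum>b\<in>K - {a0}. merged_weight w a0 a1 b) = (\<Sum>b\<in>K - {a0}. w b)"
    by (rule sum_merged_weight_notin) simp
  then show ?thesis
    using True assms sum.remove[OF assms(1,2), of "merged_weight w a0 a1"] sum.remove[OF assms(1,2), of w]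
    by (simp add: merge_into_image_in merged_weight_def)
next
  case False
  have "a0 \<in> K - {a1}" using assms(2) False by simp
  moreover have "(\<Sum>b\<in>K - {a1} - {a0}. merged_weight w a0 a1 b) = (\<Sum>b\<in>K - {a1} - {a0}. w b)"
    by (rule sum_merged_weight_notin) simp
  ultimately have "(\<Sum>b\<in>K - {a1}. merged_weight w a0 a1 b) = w a0 + w a1 + (\<Sum>b\<in>K - {a1} - {a0}. w b)"
    using assms(1) False sum.remove[of "K - {a1}" a0 "merged_weight w a0 a1"]
    by (simp add: merged_weight_def)
  moreover have "(\<Sum>b\<in>K. w b) = w a1 + w a0 + (\<Sum>b\<in>K - {a1} - {a0}. w b)"
    using assms \<open>a0 \<in> K - {a1}\<close> sum.remove[OF assms(1,3), of w] sum.remove[of "K - {a1}" a0 w] by simp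
  ultimately show ?thesis using assms False by (simp add: merge_into_image_in)
qed

locale block_contraction =
  fixes X :: "'d set" and a :: "'d \<Rightarrow> 'd" and lab :: "'d \<Rightarrow> 'b" and h :: 'd
  assumes finite_X: "finite X" and a_in: "\<And>x. x \<in> X \<Longrightarrow> a x \<in> X"
    and a_a: "\<And>x. x \<in> X \<Longrightarrow> a (a x) = x" and h_in: "h \<in> X"
begin

abbreviation "a0 \<equiv> lab h"
abbreviation "a1 \<equiv> lab (a h)"
abbreviation "r \<equiv> merge_into a0 a1"
abbreviation "L \<equiv> lab_link X a lab"
abbreviation "L' \<equiv> lab_link (X - {h, a h}) a (\<lambda>x. r (lab x))"

lemma sym_L: "sym L"
proof (rule symI)
  fix b c assume "(b, c) \<in> L"
  then obtain x where "x \<in> X" "b = lab x" "c = lab (a x)" unfolding lab_link_def by blast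
  then show "(c, b) \<in> L" unfolding lab_link_def using a_in a_a by (metis (mono_tags, lifting) mem_Collect_eq)
qed

lemma lab_comp_eq: "K \<in> lab_comps X a lab B \<Longrightarrow> c \<in> K \<Longrightarrow> K = {x. (c, x) \<in> L\<^sup>*}"
  unfolding lab_comps_def using sym_L
  by (auto simp: sym_rtrancl[THEN symD] intro: rtrancl_trans dest: sym_rtrancl[THEN symD])

lemma merge_eq_imp_rtrancl: "r b = r c \<Longrightarrow> (b, c) \<in> L\<^sup>*"
proof -
  have "(a0, a1) \<in> L" unfolding lab_link_def using h_in by blast
  moreover have "(a1, a0) \<in> L"
    using a_in[OF h_in] a_a[OF h_in] unfolding lab_link_def by (auto intro!: exI[of _ "a h"])
  ultimately show "r b = r c \<Longrightarrow> (b, c) \<in> L\<^sup>*" by (auto simp: merge_into_eq_iff doubleton_eq_iff)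
qed

lemma merge_rtrancl_iff: "(r b, r c) \<in> L'\<^sup>* \<longleftrightarrow> (b, c) \<in> L\<^sup>*"
proof
  have "(u, v) \<in> L'\<^sup>* \<Longrightarrow> r b = u \<Longrightarrow> r c = v \<Longrightarrow> (b, c) \<in> L\<^sup>*" for u v c
  proof (induct arbitrary: c rule: rtrancl_induct)
    case base then show ?case by (simp add: merge_eq_imp_rtrancl)
  next
    case (step y z)
    then obtain x where x: "x \<in> X - {h, a h}" "y = r (lab x)" "z = r (lab (a x))"
      unfolding lab_link_def by blast
    have "(b, lab x) \<in> L\<^sup>*" using step(3)[OF step(4)] x(2) by simp
    moreover have "(lab x, lab (a x)) \<in> L" using x(1) unfolding lab_link_def by blast
    moreover have "(lab (a x), c) \<in> L\<^sup>*" using step(5) x(3) by (intro merge_eq_imp_rtrancl) simp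
    ultimately show ?case by (meson rtrancl_into_rtrancl rtrancl_trans)
  qed
  then show "(r b, r c) \<in> L'\<^sup>* \<Longrightarrow> (b, c) \<in> L\<^sup>*" by blast
next
  assume "(b, c) \<in> L\<^sup>*"
  then show "(r b, r c) \<in> L'\<^sup>*"
  proof (induct rule: rtrancl_induct)
    case (step y z)
    then obtain x where x: "x \<in> X" "y = lab x" "z = lab (a x)" unfolding lab_link_def by blast
    show ?case
    proof (cases "x \<in> {h, a h}")
      case True
      then have "r y = r z" using x a_a h_in by (auto simp: merge_into_def)
      then show ?thesis using step(3) by simp
    next
      case False
      then have "(r y, r z) \<in> L'" unfolding lab_link_def using x by blast
      with step(3) show ?thesis by (rule rtrancl_into_rtrancl)
    qed
  qed simp
qed

lemma merge_mem_image_iff: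
  assumes K: "K \<in> lab_comps X a lab B"
  shows "r c \<in> r ` K \<longleftrightarrow> c \<in> K"
proof
  assume "r c \<in> r ` K"
  then obtain k where k: "k \<in> K" "r k = r c" by auto
  then have "(k, c) \<in> L\<^sup>*" by (intro merge_eq_imp_rtrancl)
  then show "c \<in> K" using lab_comp_eq[OF K k(1)] by blast
qed blast

lemma lab_comps_merge:
  "lab_comps (X - {h, a h}) a (\<lambda>x. r (lab x)) (r ` B) = (\<lambda>K. r ` K) ` lab_comps X a lab B"
proof -
  have fixed: "r d = d" if "(r b, d) \<in> L'\<^sup>*" for b d
    using that by (cases rule: rtranclE) (auto simp: lab_link_def merge_into_idem)
  have reach: "{x. (r b, x) \<in> L'\<^sup>*} = r ` {x. (b, x) \<in> L\<^sup>*}" for b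
  proof
    show "r ` {x. (b, x) \<in> L\<^sup>*} \<subseteq> {x. (r b, x) \<in> L'\<^sup>*}" using merge_rtrancl_iff by blast
    show "{x. (r b, x) \<in> L'\<^sup>*} \<subseteq> r ` {x. (b, x) \<in> L\<^sup>*}"
    proof
      fix d assume "d \<in> {x. (r b, x) \<in> L'\<^sup>*}"
      then have "(r b, r d) \<in> L'\<^sup>*" "r d = d" using fixed[of b d] by auto
      then show "d \<in> r ` {x. (b, x) \<in> L\<^sup>*}" using merge_rtrancl_iff[of b d] by force
    qed
  qed
  have "lab_comps (X - {h, a h}) a (\<lambda>x. r (lab x)) (r ` B) = (\<lambda>b. {x. (r b, x) \<in> L'\<^sup>*}) ` B"
    unfolding lab_comps_def by blast
  also have "\<dots> = (\<lambda>K. r ` K) ` lab_comps X a lab B"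
    unfolding reach lab_comps_def by blast
  finally show ?thesis .
qed

lemma lab_edge_count_merge:
  assumes K: "K \<in> lab_comps X a lab B"
  shows "lab_edge_count (X - {h, a h}) a (\<lambda>x. r (lab x)) (r ` K) =
    lab_edge_count X a lab K - (if a0 \<in> K then 1 else 0)"
proof -
  let ?e = "{h, a h}" let ?E = "(\<lambda>x. {x, a x}) ` {x \<in> X. lab x \<in> K}"
  have is_e: "{x, a x} = ?e \<longleftrightarrow> x \<in> ?e" for x
  proof
    show "x \<in> ?e" if "{x, a x} = ?e" using that by blast
    show "{x, a x} = ?e" if "x \<in> ?e" using that a_a[OF h_in] by auto
  qed
  have "{{x, a x} | x. x \<in> X - ?e \<and> r (lab x) \<in> r ` K} = (\<lambda>x. {x, a x}) ` ({x \<in> X. lab x \<in> K} - ?e)"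
    using merge_mem_image_iff[OF K] by auto
  also have "\<dots> = ?E - {?e}"
    using is_e by blast
  finally have "lab_edge_count (X - ?e) a (\<lambda>x. r (lab x)) (r ` K) = card (?E - {?e})"
    unfolding lab_edge_count_def by simp
  moreover have "?e \<in> ?E \<longleftrightarrow> a0 \<in> K"
  proof
    assume "?e \<in> ?E"
    then obtain x where x: "x \<in> X" "lab x \<in> K" "x \<in> ?e" using is_e by blast
    then show "a0 \<in> K" using lab_comp_closed[OF K x(1,2)] a_a[OF h_in] by auto
  qed (use h_in in blast)
  ultimately show ?thesis
    unfolding lab_edge_count_def setcompr_eq_image by (simp add: card_Diff_singleton_if)
qed

lemma lab_comp_mem_iff: "K \<in> lab_comps X a lab B \<Longrightarrow> a1 \<in> K \<longleftrightarrow> a0 \<in> K"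
  using merge_mem_image_iff[of K B a1] merge_mem_image_iff[of K B a0] by (simp add: merge_into_def)

lemma lab_edge_count_pos:
  assumes "K \<in> lab_comps X a lab B" "a0 \<in> K"
  shows "1 \<le> lab_edge_count X a lab K"
proof -
  have "{h, a h} \<in> {{x, a x} | x. x \<in> X \<and> lab x \<in> K}" using h_in assms(2) by blast
  moreover have "finite {{x, a x} | x. x \<in> X \<and> lab x \<in> K}"
    using finite_X by (simp add: setcompr_eq_image)
  ultimately have "0 < card {{x, a x} | x. x \<in> X \<and> lab x \<in> K}" by (auto simp: card_gt_0_iff)
  then show ?thesis unfolding lab_edge_count_def by simp
qed

lemma q1_term_merge:
  assumes K: "K \<in> lab_comps X a lab B" and fin: "finite K" and N: "N \<noteq> 0"
  shows "q1_term N ns (lab_edge_count X a lab K) (card K) f (\<Sum>b\<in>K. w b) =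
    (if a0 \<in> K then N powi (2 - int (card {a0, a1})) else 1) *
    q1_term N ns (lab_edge_count (X - {h, a h}) a (\<lambda>x. r (lab x)) (r ` K)) (card (r ` K)) f
      (\<Sum>b\<in>r ` K. merged_weight w a0 a1 b)"
proof (cases "a0 \<in> K")
  case False
  then have "a1 \<notin> K" using lab_comp_mem_iff[OF K] by simp
  then show ?thesis
    using False unfolding lab_edge_count_merge[OF K]
    by (simp add: merge_into_image_notin sum_merged_weight_notin)
next
  case True
  have a1: "a1 \<in> K" using True lab_comp_mem_iff[OF K] by simp
  note e = lab_edge_count_pos[OF K True]
  show ?thesis
  proof (cases "a0 = a1")
    case True
    then show ?thesis
      using \<open>a0 \<in> K\<close> a1 q1_term_contract_loop[OF N e]
      unfolding lab_edge_count_merge[OF K] sum_merged_weight_in[OF fin \<open>a0 \<in> K\<close> a1]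
      by (simp add: merge_into_image_in)
  next
    case False
    have "card K \<noteq> 0" using fin True by auto
    then have c: "1 \<le> card K" by simp
    have "card (r ` K) = card K - 1"
      using merge_into_image_in[OF True a1] False fin a1 by simp
    then show ?thesis
      using False True q1_term_contract_link[OF e c]
      unfolding lab_edge_count_merge[OF K] sum_merged_weight_in[OF fin True a1]
      by simp
  qed
qed

lemma inj_on_merge_image: "inj_on (\<lambda>K. r ` K) (lab_comps X a lab B)"
proof
  fix K1 K2 assume K: "K1 \<in> lab_comps X a lab B" "K2 \<in> lab_comps X a lab B" and "r ` K1 = r ` K2"
  then have "c \<in> K1 \<longleftrightarrow> c \<in> K2" for c using merge_mem_image_iff[OF K(1)] merge_mem_image_iff[OF K(2)] by metis
  then show "K1 = K2" by blast
qed

lemma q1_eval_contract: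
  assumes B: "finite B" "lab ` X \<subseteq> B" and N: "N \<noteq> 0"
    and f: "\<And>K. K \<in> lab_comps X a lab B \<Longrightarrow> f' (r ` K) = f K"
  shows "q1_eval N ns X a lab w B f = N powi (2 - int (card {a0, a1})) *
    q1_eval N ns (X - {h, a h}) a (\<lambda>x. r (lab x)) (merged_weight w a0 a1) (r ` B) f'"
proof -
  let ?C = "lab_comps X a lab B" let ?c = "N powi (2 - int (card {a0, a1}))"
  let ?T' = "\<lambda>K. q1_term N ns (lab_edge_count (X - {h, a h}) a (\<lambda>x. r (lab x)) K) (card K) (f' K)
    (\<Sum>b\<in>K. merged_weight w a0 a1 b)"
  define K0 where "K0 = {x. (a0, x) \<in> L\<^sup>*}"
  have K0: "K0 \<in> ?C" unfolding K0_def lab_comps_def using B(2) h_in by blast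
  have finC: "finite ?C" unfolding lab_comps_def using B(1) by (simp add: setcompr_eq_image)
  have "lab ` a ` X \<subseteq> B" using a_in B(2) by blast
  then have finK: "finite K" if "K \<in> ?C" for K
    using lab_comp_subset[OF that] by (blast intro: finite_subset[OF _ B(1)])
  have K0_iff: "a0 \<in> K \<longleftrightarrow> K = K0" if "K \<in> ?C" for K
    using lab_comp_eq[OF that] K0_def by (auto simp: K0_def)
  have "q1_eval N ns X a lab w B f = (\<Prod>K\<in>?C. (if K = K0 then ?c else 1) * ?T' (r ` K))"
    unfolding q1_eval_def
    by (rule prod.cong[OF refl]) (simp add: q1_term_merge[OF _ finK N] f K0_iff)
  also have "\<dots> = ?c * (\<Prod>K\<in>?C. ?T' (r ` K))"
    by (simp add: prod.distrib finC K0)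
  also have "(\<Prod>K\<in>?C. ?T' (r ` K)) =
      q1_eval N ns (X - {h, a h}) a (\<lambda>x. r (lab x)) (merged_weight w a0 a1) (r ` B) f'"
    unfolding q1_eval_def lab_comps_merge prod.reindex[OF inj_on_merge_image] by simp
  finally show ?thesis .
qed

end

lemma edge_closed_del_edgesD:
  assumes "edge_closed (rg_del_edges G R) R'"
  shows "edge_closed G R'" "R' \<inter> R = {}"
proof -
  have R': "R' \<subseteq> rD G - R" "\<forall>x\<in>R'. ralp (rg_del_edges G R) x \<in> R'"
    using assms unfolding edge_closed_def rg_del_edges_simps(1) by blast+
  have "ralp G x \<in> R'" if "x \<in> R'" for x
  proof -
    have "x \<in> rD G - R" using R'(1) that by blast
    moreover have "ralp (rg_del_edges G R) x \<in> R'" using R'(2) that by blast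
    ultimately show ?thesis by simp
  qed
  then show "edge_closed G R'" "R' \<inter> R = {}" using R'(1) unfolding edge_closed_def by auto
qed

lemma edge_closed_con_edgesD:
  assumes "edge_closed (rg_con_edges G R) R'"
  shows "edge_closed G R'" "R' \<inter> R = {}"
  using assms edge_closed_del_edgesD[of "rg_dual G" R R'] by (simp_all add: rg_con_edges_def)

lemma del_face_count_pdelete:
  assumes P: "wf_pkg P" and h: "h \<in> rD (prg P)"
    and R': "edge_closed (rg_del_edges (prg P) {h, ralp (prg P) h}) R'"
    and K: "K \<in> lab_comps (rD (prg P) - ({h, ralp (prg P) h} \<union> R')) (ralp (prg P)) (plv P) (blocksV P)"
  shows "del_face_count (pdelete P h) R' K = del_face_count P ({h, ralp (prg P) h} \<union> R') K"
proof -
  let ?G = "prg P" let ?e = "{h, ralp (prg P) h}" let ?Q = "\<lambda>y. plv P y \<in> K"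
  note w = wf_pkgD[OF P]
  have e: "edge_closed ?G ?e" by (rule edge_closed_edge[OF w(1) h])
  have disj: "R' \<inter> ?e = {}" by (rule edge_closed_del_edgesD(2)[OF R'])
  have eR': "edge_closed ?G (?e \<union> R')"
    using e edge_closed_del_edgesD(1)[OF R'] by (auto simp: edge_closed_def)
  have "card {orb (cut_phi (rg_del_edges ?G ?e) R') y | y. y \<in> rD ?G - ?e \<and> ?Q y} +
      card {t \<in> isolated_tokens (rsig ?G) (rD ?G) ?e. ?Q t} =
      card {orb (cut_phi ?G (?e \<union> R')) y | y. y \<in> rD ?G \<and> ?Q y}"
  proof (rule card_orbits_skip_plus_tokens[OF cut_phi_permutes[OF w(1) eR'] wf_rgD(1)[OF w(1)]])
    show "?Q (cut_phi ?G (?e \<union> R') y) = ?Q y" for y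
      by (rule cut_phi_lab_comp_invariant[OF P eR' K])
    show "cut_phi (rg_del_edges ?G ?e) R' y = skip (cut_phi ?G (?e \<union> R')) ?e y"
      if "y \<in> rD ?G - ?e" for y
      by (rule cut_phi_del_edges[OF w(1) e disj that])
    show "rsig ?G u = cut_phi ?G (?e \<union> R') u" if "u \<in> ?e" for u
      using that by (intro cut_phi_in[symmetric]) blast
  qed
  then show ?thesis
    unfolding del_face_count_def pdelete_simps rg_del_edges_simps
    using card_isolated_filter[OF w(1), of ?e "rsig ?G" ?Q] e by (simp add: edge_closed_def)
qed

lemma q1_pdelete_del_edges:
  assumes P: "wf_pkg P" and h: "h \<in> rD (prg P)"
    and R': "edge_closed (rg_del_edges (prg P) {h, ralp (prg P) h}) R'"
  shows "q1 N ns ((pdelete P h)\<lparr>prg := rg_del_edges (prg (pdelete P h)) R'\<rparr>) =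
         q1 N ns (P\<lparr>prg := rg_del_edges (prg P) ({h, ralp (prg P) h} \<union> R')\<rparr>)"
proof -
  let ?G = "prg P" let ?e = "{h, ralp (prg P) h}" let ?Pd = "pdelete P h"
  note w = wf_pkgD[OF P]
  have e: "edge_closed ?G ?e" by (rule edge_closed_edge[OF w(1) h])
  have eR': "edge_closed ?G (?e \<union> R')"
    using e edge_closed_del_edgesD(1)[OF R'] by (auto simp: edge_closed_def)
  have X: "rD (prg ?Pd) - R' = rD ?G - (?e \<union> R')" by auto
  have B: "blocksV ?Pd = blocksV P"
    using blocksV_del_edges[OF P e] by (simp add: blocksV_def)
  have "q1 N ns (P\<lparr>prg := rg_del_edges ?G (?e \<union> R')\<rparr>) =
      q1_eval N ns (rD ?G - (?e \<union> R')) (ralp ?G) (plv P) (pwv P) (blocksV P) (del_face_count P (?e \<union> R'))"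
    by (rule q1_del_edges_eq_eval[OF P eR'])
  also have "\<dots> = q1_eval N ns (rD (prg ?Pd) - R') (ralp (prg ?Pd)) (plv ?Pd) (pwv ?Pd) (blocksV ?Pd)
      (del_face_count ?Pd R')"
    unfolding X B pdelete_simps(2,3)
    by (rule q1_eval_cong) (simp_all add: del_face_count_pdelete[OF P h R'])
  also have "\<dots> = q1 N ns (?Pd\<lparr>prg := rg_del_edges (prg ?Pd) R'\<rparr>)"
    using R' by (intro q1_del_edges_eq_eval[symmetric] wf_pkg_pdelete[OF P h]) simp
  finally show ?thesis ..
qed

lemma del_face_count_pcontract:
  assumes P: "wf_pkg P" and h: "h \<in> rD (prg P)"
    and R': "edge_closed (rg_con_edges (prg P) {h, ralp (prg P) h}) R'"
    and K: "K \<in> lab_comps (rD (prg P) - R') (ralp (prg P)) (plv P) (blocksV P)"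
    and K_iff: "\<And>y. plv (pcontract P h) y \<in> K' \<longleftrightarrow> plv P y \<in> K"
  shows "del_face_count (pcontract P h) R' K' = del_face_count P R' K"
proof -
  let ?G = "prg P" let ?e = "{h, ralp (prg P) h}" let ?Q = "\<lambda>y. plv P y \<in> K"
  note w = wf_pkgD[OF P]
  have e: "edge_closed ?G ?e" by (rule edge_closed_edge[OF w(1) h])
  note R'G = edge_closed_con_edgesD(1)[OF R'] and disj = edge_closed_con_edgesD(2)[OF R']
  have "card {orb (cut_phi (rg_con_edges ?G ?e) R') y | y. y \<in> rD ?G - ?e \<and> ?Q y} +
      card {t \<in> isolated_tokens (rg_phi ?G) (rD ?G) ?e. ?Q t} =
      card {orb (cut_phi ?G R') y | y. y \<in> rD ?G \<and> ?Q y}"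
  proof (rule card_orbits_skip_plus_tokens[OF cut_phi_permutes[OF w(1) R'G] wf_rgD(1)[OF w(1)]])
    show "?Q (cut_phi ?G R' y) = ?Q y" for y
      by (rule cut_phi_lab_comp_invariant[OF P R'G K])
    show "cut_phi (rg_con_edges ?G ?e) R' y = skip (cut_phi ?G R') ?e y" if "y \<in> rD ?G - ?e" for y
      by (rule cut_phi_con_edges[OF w(1) e disj that])
    show "rg_phi ?G u = cut_phi ?G R' u" if "u \<in> ?e" for u
      using that disj by (auto simp: cut_phi_notin)
  qed
  then show ?thesis
    unfolding del_face_count_def unfolding K_iff pcontract_simps(1) rg_con_edges_simps
    using card_isolated_filter[OF w(1), of ?e "rg_phi ?G" ?Q] e by (simp add: edge_closed_def)
qed

lemma q1_pcontract_del_edges_eq_eval: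
  assumes P: "wf_pkg P" and h: "h \<in> rD (prg P)"
    and R': "edge_closed (rg_con_edges (prg P) {h, ralp (prg P) h}) R'"
  shows "q1 N ns ((pcontract P h)\<lparr>prg := rg_del_edges (prg (pcontract P h)) R'\<rparr>) =
    q1_eval N ns (rD (prg P) - R' - {h, ralp (prg P) h}) (ralp (prg P))
      (\<lambda>x. merge_into (plv P h) (plv P (ralp (prg P) h)) (plv P x))
      (merged_weight (pwv P) (plv P h) (plv P (ralp (prg P) h)))
      (merge_into (plv P h) (plv P (ralp (prg P) h)) ` blocksV P) (del_face_count (pcontract P h) R')"
proof -
  let ?Pc = "pcontract P h"
  have X: "rD (prg ?Pc) - R' = rD (prg P) - R' - {h, ralp (prg P) h}"
    by (auto simp: rg_con_edges_simps)
  have "q1 N ns (?Pc\<lparr>prg := rg_del_edges (prg ?Pc) R'\<rparr>) =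
      q1_eval N ns (rD (prg ?Pc) - R') (ralp (prg ?Pc)) (plv ?Pc) (pwv ?Pc) (blocksV ?Pc) (del_face_count ?Pc R')"
    using R' by (intro q1_del_edges_eq_eval wf_pkg_pcontract[OF P h]) simp
  also have "\<dots> = q1_eval N ns (rD (prg P) - R' - {h, ralp (prg P) h}) (ralp (prg P))
      (\<lambda>x. merge_into (plv P h) (plv P (ralp (prg P) h)) (plv P x))
      (merged_weight (pwv P) (plv P h) (plv P (ralp (prg P) h)))
      (merge_into (plv P h) (plv P (ralp (prg P) h)) ` blocksV P) (del_face_count ?Pc R')"
    unfolding X blocksV_pcontract[OF P h] pcontract_simps(2,3)
    by (rule q1_eval_cong) (simp_all add: rg_con_edges_simps)
  finally show ?thesis .
qed

lemma q1_pcontract_del_edges: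
  assumes P: "wf_pkg P" and h: "h \<in> rD (prg P)" and N: "N \<noteq> 0"
    and R': "edge_closed (rg_con_edges (prg P) {h, ralp (prg P) h}) R'"
  shows "q1 N ns (P\<lparr>prg := rg_del_edges (prg P) R'\<rparr>) =
    N powi (2 - int (mu P h)) * q1 N ns ((pcontract P h)\<lparr>prg := rg_del_edges (prg (pcontract P h)) R'\<rparr>)"
proof -
  let ?G = "prg P" let ?D = "rD ?G"
  let ?r = "merge_into (plv P h) (plv P (ralp ?G h))"
  note w = wf_pkgD[OF P]
  note R'G = edge_closed_con_edgesD(1)[OF R'] and disj = edge_closed_con_edgesD(2)[OF R']
  interpret block_contraction "?D - R'" "ralp ?G" "plv P" h
    using wf_rgD(1)[OF w(1)] ralp_in_diff[OF w(1) R'G] ralp_ralp[OF w(1)] h disj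
    by unfold_locales auto
  have "q1 N ns (P\<lparr>prg := rg_del_edges ?G R'\<rparr>) =
      q1_eval N ns (?D - R') (ralp ?G) (plv P) (pwv P) (blocksV P) (del_face_count P R')"
    by (rule q1_del_edges_eq_eval[OF P R'G])
  also have "\<dots> = N powi (2 - int (mu P h)) * q1_eval N ns (?D - R' - {h, ralp ?G h}) (ralp ?G)
      (\<lambda>x. ?r (plv P x)) (merged_weight (pwv P) (plv P h) (plv P (ralp ?G h))) (?r ` blocksV P)
      (del_face_count (pcontract P h) R')"
    unfolding mu_def
  proof (rule q1_eval_contract)
    show "finite (blocksV P)" using wf_rgD(1,2)[OF w(1)] by (simp add: blocksV_def)
    show "plv P ` (?D - R') \<subseteq> blocksV P" by (auto simp: blocksV_def)
    fix K assume K: "K \<in> lab_comps (?D - R') (ralp ?G) (plv P) (blocksV P)"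
    show "del_face_count (pcontract P h) R' (?r ` K) = del_face_count P R' K"
      using merge_mem_image_iff[OF K] by (intro del_face_count_pcontract[OF P h R' K]) simp
  qed (rule N)
  finally show ?thesis unfolding q1_pcontract_del_edges_eq_eval[OF P h R'] .
qed

section \<open>The recurrences for q and p\<close>

lemma sum_Pow_insert:
  assumes "finite E" "e \<notin> E"
  shows "(\<Sum>A\<in>Pow (insert e E). f A) = (\<Sum>A\<in>Pow E. f A) + (\<Sum>A\<in>Pow E. f (insert e A))"
proof -
  have "inj_on (insert e) (Pow E)"
  proof (rule inj_onI)
    fix A B assume "A \<in> Pow E" "B \<in> Pow E" "insert e A = insert e B"
    then show "A = B" using assms(2) insert_ident[of e A B] by blast
  qed
  moreover have "Pow E \<inter> insert e ` Pow E = {}" using assms(2) by blast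
  ultimately show ?thesis
    using assms(1) by (simp add: Pow_insert sum.union_disjoint sum.reindex)
qed

context
  fixes P :: "('d, 'b, 'c) pkg" and h :: 'd
  assumes P: "wf_pkg P" and h: "h \<in> rD (prg P)"
begin

abbreviation "e \<equiv> {h, ralp (prg P) h}"
abbreviation "E' \<equiv> rg_edges (prg P) - {e}"

lemma qG_pdelete_as_sum:
  "qG N ns (pdelete P h) = (\<Sum>B\<in>Pow E'.
     (-1) ^ card (E' - B) * q1 N ns (P\<lparr>prg := rg_del_edges (prg P) (e \<union> \<Union>(E' - B))\<rparr>))"
  unfolding qG_def
proof (rule sum.cong)
  note w = wf_pkgD[OF P]
  have E: "rg_edges (prg (pdelete P h)) = E'" by (simp add: rg_edges_del_edge[OF w(1) h])
  then show "Pow (rg_edges (prg (pdelete P h))) = Pow E'" by simp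
  fix B assume "B \<in> Pow E'"
  then have "edge_closed (prg (pdelete P h)) (\<Union>(E' - B))"
    using wf_rg_del_edges[OF w(1) edge_closed_edge[OF w(1) h]] E by (intro edge_closed_Union) auto
  then show "(-1) ^ card (rg_edges (prg (pdelete P h)) - B) *
      q1 N ns ((pdelete P h)\<lparr>prg := rg_del_edges (prg (pdelete P h)) (\<Union>(rg_edges (prg (pdelete P h)) - B))\<rparr>) =
    (-1) ^ card (E' - B) * q1 N ns (P\<lparr>prg := rg_del_edges (prg P) (e \<union> \<Union>(E' - B))\<rparr>)"
    unfolding E using q1_pdelete_del_edges[OF P h, of "\<Union>(E' - B)" N ns] by simp
qed

lemma qG_pcontract_as_sum:
  assumes N: "N \<noteq> 0"
  shows "N powi (2 - int (mu P h)) * qG N ns (pcontract P h) = (\<Sum>B\<in>Pow E'.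
     (-1) ^ card (E' - B) * q1 N ns (P\<lparr>prg := rg_del_edges (prg P) (\<Union>(E' - B))\<rparr>))"
  unfolding qG_def sum_distrib_left
proof (rule sum.cong)
  note w = wf_pkgD[OF P]
  have E: "rg_edges (prg (pcontract P h)) = E'" by (simp add: rg_edges_con_edge[OF w(1) h])
  then show "Pow (rg_edges (prg (pcontract P h))) = Pow E'" by simp
  fix B assume "B \<in> Pow E'"
  then have "edge_closed (prg (pcontract P h)) (\<Union>(E' - B))"
    using wf_rg_con_edges[OF w(1) edge_closed_edge[OF w(1) h]] E by (intro edge_closed_Union) auto
  then show "N powi (2 - int (mu P h)) * ((-1) ^ card (rg_edges (prg (pcontract P h)) - B) *
      q1 N ns ((pcontract P h)\<lparr>prg := rg_del_edges (prg (pcontract P h)) (\<Union>(rg_edges (prg (pcontract P h)) - B))\<rparr>)) =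
    (-1) ^ card (E' - B) * q1 N ns (P\<lparr>prg := rg_del_edges (prg P) (\<Union>(E' - B))\<rparr>)"
    unfolding E using q1_pcontract_del_edges[OF P h N, of "\<Union>(E' - B)" ns] by simp
qed

lemma qG_deletion_contraction:
  assumes N: "N \<noteq> 0"
  shows "qG N ns P = N powi (2 - int (mu P h)) * qG N ns (pcontract P h) - qG N ns (pdelete P h)"
proof -
  let ?t = "\<lambda>A. (-1::real) ^ card (rg_edges (prg P) - A) *
    q1 N ns (P\<lparr>prg := rg_del_edges (prg P) (\<Union>(rg_edges (prg P) - A))\<rparr>)"
  have E: "rg_edges (prg P) = insert e E'" "e \<notin> E'" "finite E'"
    using h wf_rgD(1)[OF wf_pkgD(1)[OF P]] by (auto simp: rg_edges_def setcompr_eq_image)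
  have "qG N ns P = (\<Sum>A\<in>Pow (insert e E'). ?t A)"
    unfolding qG_def by (simp only: E(1)[symmetric])
  also have "\<dots> = (\<Sum>B\<in>Pow E'. ?t B) + (\<Sum>B\<in>Pow E'. ?t (insert e B))"
    by (rule sum_Pow_insert[OF E(3,2)])
  finally have "qG N ns P = (\<Sum>B\<in>Pow E'. ?t B) + (\<Sum>B\<in>Pow E'. ?t (insert e B))" .
  moreover have "?t B = - ((-1) ^ card (E' - B) * q1 N ns (P\<lparr>prg := rg_del_edges (prg P) (e \<union> \<Union>(E' - B))\<rparr>))"
    if "B \<in> Pow E'" for B
  proof -
    have "e \<in> rg_edges (prg P)" using E(1) by blast
    then have "rg_edges (prg P) - B = insert e (E' - B)" "e \<notin> E' - B" using that by auto
    then show ?thesis using E(3) by simp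
  qed
  moreover have "?t (insert e B) = (-1) ^ card (E' - B) * q1 N ns (P\<lparr>prg := rg_del_edges (prg P) (\<Union>(E' - B))\<rparr>)"
    for B
  proof -
    have "rg_edges (prg P) - insert e B = E' - B" by blast
    then show ?thesis by simp
  qed
  ultimately show ?thesis
    unfolding qG_pdelete_as_sum qG_pcontract_as_sum[OF N] by (simp add: sum_negf)
qed

end

lemma qG_no_edges:
  assumes P: "wf_pkg P" and D: "rD (prg P) = {}"
  shows "qG N ns P = (\<Prod>b\<in>blocksV P. N powi (-1) *
            sum_list (map (\<lambda>n. real n powi (1 + int (bsizeV P b) - int (pwv P b))) ns))"
proof -
  let ?G = "prg P" let ?lv = "plv P"
  have "rg_edges ?G = {}" unfolding rg_edges_def using D by simp
  then have "qG N ns P = q1 N ns (P\<lparr>prg := rg_del_edges ?G {}\<rparr>)" unfolding qG_def by simp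
  also have "\<dots> = q1_eval N ns {} (ralp ?G) ?lv (pwv P) (blocksV P) (del_face_count P {})"
    using q1_del_edges_eq_eval[OF P, of "{}"] D by (simp add: edge_closed_def)
  also have "\<dots> = (\<Prod>b\<in>blocksV P. q1_term N ns 0 1 (card {t \<in> rI ?G. ?lv t = b}) (pwv P b))"
  proof -
    have "lab_comps {} (ralp ?G) ?lv (blocksV P) = (\<lambda>b. {b}) ` blocksV P"
      unfolding lab_comps_def lab_link_def by auto
    moreover have "lab_edge_count {} (ralp ?G) ?lv K = 0" for K unfolding lab_edge_count_def by simp
    ultimately show ?thesis
      unfolding q1_eval_def using D by (simp add: prod.reindex del_face_count_def)
  qed
  also have "\<dots> = (\<Prod>b\<in>blocksV P. N powi (-1) *
            sum_list (map (\<lambda>n. real n powi (1 + int (bsizeV P b) - int (pwv P b))) ns))"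
  proof (rule prod.cong[OF refl])
    fix b
    have "rg_verts ?G = (\<lambda>t. {t}) ` rI ?G" unfolding rg_verts_def D by auto
    then have "{v \<in> rg_verts ?G. \<exists>x\<in>v. ?lv x = b} = (\<lambda>t. {t}) ` {t \<in> rI ?G. ?lv t = b}" by auto
    then have "bsizeV P b = card {t \<in> rI ?G. ?lv t = b}"
      unfolding bsizeV_def by (simp add: card_image inj_on_def)
    then show "q1_term N ns 0 1 (card {t \<in> rI ?G. ?lv t = b}) (pwv P b) =
        N powi (-1) * sum_list (map (\<lambda>n. real n powi (1 + int (bsizeV P b) - int (pwv P b))) ns)"
      unfolding q1_term_def by (simp add: algebra_simps)
  qed
  finally show ?thesis .
qed

lemma p1_eq_q1_pdual: "p1 N ns Q = q1 N ns (pdual Q)"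
proof -
  have "compsV (pdual Q) = compsF Q"
    unfolding compsV_def compsF_def linkV_def linkF_def blocksV_def blocksF_def by simp
  moreover have "q1conn N ns (subV (pdual Q) H) = p1conn N ns (subF Q H)" for H
    unfolding q1conn_def p1conn_def subV_def subF_def nv_def nf_def ne_def totV_def totF_def
      blocksV_def blocksF_def
    by (simp add: rg_verts_dual)
  ultimately show ?thesis unfolding p1_def q1_def by simp
qed

lemma pG_eq_qG_pdual:
  assumes P: "wf_pkg P"
  shows "pG N ns P = qG N ns (pdual P)"
  unfolding pG_def qG_def pdual_simps rg_edges_dual
proof (rule sum.cong[OF refl])
  let ?G = "prg P"
  note G = wf_pkgD(1)[OF P]
  fix A assume "A \<in> Pow (rg_edges ?G)"
  have "edge_closed (rg_dual ?G) (\<Union>(rg_edges ?G - A))"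
    using edge_closed_Union[OF G, of "rg_edges ?G - A"] by simp
  then have "rg_dual (rg_con_edges ?G (\<Union>(rg_edges ?G - A))) = rg_del_edges (rg_dual ?G) (\<Union>(rg_edges ?G - A))"
    unfolding rg_con_edges_def by (intro rg_dual_dual wf_rg_del_edges wf_rg_dual[OF G])
  then show "(-1) ^ card (rg_edges ?G - A) * p1 N ns (P\<lparr>prg := rg_con_edges ?G (\<Union>(rg_edges ?G - A))\<rparr>) =
      (-1) ^ card (rg_edges ?G - A) * q1 N ns ((pdual P)\<lparr>prg := rg_del_edges (rg_dual ?G) (\<Union>(rg_edges ?G - A))\<rparr>)"
    unfolding p1_eq_q1_pdual by (simp add: pdual_def)
qed

lemma eta_eq_mu_pdual: "eta P h = mu (pdual P) h"
  by (simp add: eta_def mu_def)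

lemma pcontract_pdual: "wf_pkg P \<Longrightarrow> pcontract (pdual P) h = pdual (pdelete P h)"
  by (simp add: pcontract_def pdual_pdual wf_pkgD(1))

lemma pdual_pcontract: "wf_pkg P \<Longrightarrow> h \<in> rD (prg P) \<Longrightarrow> pdual (pcontract P h) = pdelete (pdual P) h"
  unfolding pcontract_def
  by (intro pdual_pdual wf_pkgD(1) wf_pkg_pdelete wf_pkg_pdual) simp_all

lemma pG_deletion_contraction:
  assumes P: "wf_pkg P" and h: "h \<in> rD (prg P)" and N: "N \<noteq> 0"
  shows "pG N ns P = N powi (2 - int (eta P h)) * pG N ns (pdelete P h) - pG N ns (pcontract P h)"
  using qG_deletion_contraction[OF wf_pkg_pdual[OF P], of h N ns] h N
  by (simp add: pG_eq_qG_pdual P wf_pkg_pdelete wf_pkg_pcontract eta_eq_mu_pdual pcontract_pdual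
      pdual_pcontract)

lemma pG_no_edges:
  assumes P: "wf_pkg P" and D: "rD (prg P) = {}"
  shows "pG N ns P = (\<Prod>b\<in>blocksF P. N powi (-1) *
            sum_list (map (\<lambda>n. real n powi (1 + int (bsizeF P b) - int (pwf P b))) ns))"
proof -
  have "blocksV (pdual P) = blocksF P" "bsizeV (pdual P) b = bsizeF P b" for b
    by (simp_all add: blocksV_def blocksF_def bsizeV_def bsizeF_def rg_verts_dual)
  then show ?thesis using qG_no_edges[OF wf_pkg_pdual[OF P]] D by (simp add: pG_eq_qG_pdual[OF P])
qed

theorem theorem5p6:
  fixes Gam :: "'g monoid" and ns :: "nat list" and P :: "('d, 'b, 'c) pkg"
  assumes "group Gam" and "finite (carrier Gam)" and "irrep_dims Gam ns" and "wf_pkg P"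
  shows
   "(\<forall>h\<in>rD (prg P).
       qG (real (card (carrier Gam))) ns P =
         real (card (carrier Gam)) powi (2 - int (mu P h)) * qG (real (card (carrier Gam))) ns (pcontract P h)
         - qG (real (card (carrier Gam))) ns (pdelete P h)) \<and>
    (rD (prg P) = {} \<longrightarrow>
       qG (real (card (carrier Gam))) ns P =
         (\<Prod>b\<in>blocksV P. real (card (carrier Gam)) powi (-1) *
            sum_list (map (\<lambda>n. real n powi (1 + int (bsizeV P b) - int (pwv P b))) ns))) \<and>
    (\<forall>h\<in>rD (prg P).
       pG (real (card (carrier Gam))) ns P =
         real (card (carrier Gam)) powi (2 - int (eta P h)) * pG (real (card (carrier Gam))) ns (pdelete P h)
         - pG (real (card (carrier Gam))) ns (pcontract P h)) \<and>
    (rD (prg P) = {} \<longrightarrow>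
       pG (real (card (carrier Gam))) ns P =
         (\<Prod>b\<in>blocksF P. real (card (carrier Gam)) powi (-1) *
            sum_list (map (\<lambda>n. real n powi (1 + int (bsizeF P b) - int (pwf P b))) ns)))"
proof -
  have "\<one>\<^bsub>Gam\<^esub> \<in> carrier Gam" using assms(1) by (simp add: group.is_monoid)
  then have N: "real (card (carrier Gam)) \<noteq> 0" using assms(2) by (auto simp: card_gt_0_iff)
  show ?thesis
    using qG_deletion_contraction[OF assms(4) _ N] qG_no_edges[OF assms(4)]
      pG_deletion_contraction[OF assms(4) _ N] pG_no_edges[OF assms(4)]
    by (intro conjI ballI impI) simp_all
qed

end
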